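(* Assume (A1) $\frac1n\sum_{a,i}y_{ai}^4<C_1$ and $\frac1n\sum_{s,i}x_{si}^4<C_1$ for all $n$; (A2) $\frac1n\mathbf{x}'\mathbf{x}\to\mathbf{M}$ positive definite; (A5) the diagonal entries of $\mathbf{m}\pi$ lie in $(c,C)$, $0<c<C<\infty$, for all $n$. Let $\hat b_n=(\mathbf{x}'\mathbf{m}\mathbf{R}\mathbf{x})^{+}\mathbf{x}'\mathbf{m}\mathbf{R}y$ and $b_n=(\mathbf{x}'\mathbf{m}\pi\mathbf{x})^{+}\mathbf{x}'\mathbf{m}\pi y$. If $|||\mathbf{D}|||_2/n\to0$, then $$\hat b_n-b_n=O_p\Big(\sqrt{|||\mathbf{D}|||_2/n}\Big).$$ If instead of (A1) one assumes (A1$'$) $\max_i|y_{ai}|$ and $\max_i|x_{si}|$ are bounded by a constant uniformly in $a,s,n$, and $\frac1n\|\mathbf{D}\|_1/n\to0$, then $\hat b_n-b_n=O_p\big(\sqrt{\tfrac1n\|\mathbf{D}\|_1/n}\big)$.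
   Context: Setup: $k$ arms and $p$ covariates fixed, $n\to\infty$ along a sequence of finite populations with randomized designs; randomness only from assignment. $\mathbf{R}$ is the $kn\times kn$ diagonal matrix of assignment indicators $\mathbf{R}_{ai}\in\{0,1\}$ (ordered arm by arm, one arm per unit), $\pi=\mathrm{E}[\mathbf{R}]$ with entries in $(0,1)$, $1_{kn}$ all-ones, $\mathbf{D}=\mathrm{Var}(\pi^{-1}\mathbf{R}1_{kn})$; $|||\cdot|||_2$ spectral norm; $\|\mathbf{D}\|_1=\sum_{r,s}|\mathbf{D}_{rs}|$. $y\in\mathbb{R}^{kn}$ stacks potential outcomes $y_{ai}$; $X\in\mathbb{R}^{n\times p}$ has entries $x_{is}$ (written $x_{si}$); $\mathbf{1}=I_k\otimes1_n$; $\mathbf{x}=[\mathbf{1}\mid1_k\otimes X]$; $\mathbf{m}$ diagonal with positive diagonal; $A^+$ Moore–Penrose inverse. *)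

theory Defs
  imports "Jordan_Normal_Form.Matrix" "HOL-Probability.Probability_Mass_Function"
begin

text \<open>There are k arms, p covariates and a sequence of finite populations
indexed by nu, population nu having size N nu.  A (randomized) design is a probability
mass function on assignments z, where z i is the arm (in 0..k-1) of unit i (i < N nu).
Vectors/matrices of length kn are ordered arm by arm: row index a * n + i.\<close>

definition vnorm :: "real Matrix.vec \<Rightarrow> real" where
  "vnorm v = sqrt (\<Sum>i<dim_vec v. (v $ i)^2)"

definition spec_norm :: "real Matrix.mat \<Rightarrow> real" where
  "spec_norm A = Sup {vnorm (A *\<^sub>v v) | v. v \<in> carrier_vec (dim_col A) \<and> vnorm v \<le> 1}"

definition l1_norm :: "real Matrix.mat \<Rightarrow> real" where
  "l1_norm A = (\<Sum>r<dim_row A. \<Sum>s<dim_col A. \<bar>A $$ (r,s)\<bar>)"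

definition mp_inverse :: "real Matrix.mat \<Rightarrow> real mat" where
  "mp_inverse A = (THE B. B \<in> carrier_mat (dim_col A) (dim_row A) \<and>
      A * B * A = A \<and> B * A * B = B \<and>
      transpose_mat (A * B) = A * B \<and> transpose_mat (B * A) = B * A)"

definition pos_def_mat :: "real Matrix.mat \<Rightarrow> bool" where
  "pos_def_mat M \<longleftrightarrow> (\<exists>d. M \<in> carrier_mat d d) \<and> transpose_mat M = M \<and>
     (\<forall>v \<in> carrier_vec (dim_row M). v \<noteq> 0\<^sub>v (dim_row M) \<longrightarrow> Matrix.scalar_prod v (M *\<^sub>v v) > 0)"

definition diag_kn :: "nat \<Rightarrow> nat \<Rightarrow> (nat \<Rightarrow> nat \<Rightarrow> real) \<Rightarrow> real mat" where
  "diag_kn k n f = Matrix.mat (k*n) (k*n) (\<lambda>(r,s). if r = s then f (r div n) (r mod n) else 0)"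

definition vec_kn :: "nat \<Rightarrow> nat \<Rightarrow> (nat \<Rightarrow> nat \<Rightarrow> real) \<Rightarrow> real Matrix.vec" where
  "vec_kn k n f = Matrix.vec (k*n) (\<lambda>r. f (r div n) (r mod n))"

text \<open>Design matrix x = [I_k \<otimes> 1_n | 1_k \<otimes> X], of size kn x (k+p); X i s = x_{si}.\<close>
definition design_x :: "nat \<Rightarrow> nat \<Rightarrow> nat \<Rightarrow> (nat \<Rightarrow> nat \<Rightarrow> real) \<Rightarrow> real mat" where
  "design_x k p n X = Matrix.mat (k*n) (k+p) (\<lambda>(r,c).
      if c < k then (if r div n = c then 1 else 0) else X (r mod n) (c - k))"

definition Rind :: "(nat \<Rightarrow> nat) \<Rightarrow> nat \<Rightarrow> nat \<Rightarrow> real" where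
  "Rind z a i = (if z i = a then 1 else 0)"

definition piP :: "(nat \<Rightarrow> nat) pmf \<Rightarrow> nat \<Rightarrow> nat \<Rightarrow> real" where
  "piP P a i = measure_pmf.expectation P (\<lambda>z. Rind z a i)"

text \<open>D = Var(pi^{-1} R 1_{kn}) (covariance matrix of the vector with entries R_{ai}/pi_{ai}).\<close>
definition Dmat :: "nat \<Rightarrow> nat \<Rightarrow> (nat \<Rightarrow> nat) pmf \<Rightarrow> real mat" where
  "Dmat k n P = Matrix.mat (k*n) (k*n) (\<lambda>(r,s).
     let w = (\<lambda>t z. Rind z (t div n) (t mod n) / piP P (t div n) (t mod n)) in
     measure_pmf.expectation P (\<lambda>z. (w r z - measure_pmf.expectation P (w r)) *
                                    (w s z - measure_pmf.expectation P (w s))))"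

definition bhat :: "nat \<Rightarrow> nat \<Rightarrow> nat \<Rightarrow> (nat \<Rightarrow> nat \<Rightarrow> real) \<Rightarrow> (nat \<Rightarrow> nat \<Rightarrow> real)
    \<Rightarrow> (nat \<Rightarrow> nat \<Rightarrow> real) \<Rightarrow> (nat \<Rightarrow> nat) \<Rightarrow> real Matrix.vec" where
  "bhat k p n y X m z =
     (let x = design_x k p n X; W = diag_kn k n m * diag_kn k n (Rind z) in
      mp_inverse (transpose_mat x * W * x) *\<^sub>v (transpose_mat x * W *\<^sub>v vec_kn k n y))"

definition btarget :: "nat \<Rightarrow> nat \<Rightarrow> nat \<Rightarrow> (nat \<Rightarrow> nat \<Rightarrow> real) \<Rightarrow> (nat \<Rightarrow> nat \<Rightarrow> real)
    \<Rightarrow> (nat \<Rightarrow> nat \<Rightarrow> real) \<Rightarrow> (nat \<Rightarrow> nat) pmf \<Rightarrow> real Matrix.vec" where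
  "btarget k p n y X m P =
     (let x = design_x k p n X; W = diag_kn k n m * diag_kn k n (piP P) in
      mp_inverse (transpose_mat x * W * x) *\<^sub>v (transpose_mat x * W *\<^sub>v vec_kn k n y))"

definition bigO_p :: "(nat \<Rightarrow> 'z pmf) \<Rightarrow> (nat \<Rightarrow> 'z \<Rightarrow> real Matrix.vec) \<Rightarrow> (nat \<Rightarrow> real) \<Rightarrow> bool" where
  "bigO_p P Xs r \<longleftrightarrow> (\<forall>\<epsilon>>0. \<exists>B. \<exists>N0. \<forall>\<nu>\<ge>N0.
      measure_pmf.prob (P \<nu>) {z. vnorm (Xs \<nu> z) > B * r \<nu>} < \<epsilon>)"

end

(*
  Write G(w) = x' diag(w) x / n and h(w) = x' diag(w) y / n. The estimator solves G(mR) b = h(mR),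
  the target G(m pi) b = h(m pi). By (A2) and (A5), G(m pi) is uniformly coercive for large n, so a
  perturbation bound for linear systems turns entrywise errors of size eta in G and h into an
  estimation error O(eta). Every entry of G(mR) - G(m pi) and h(mR) - h(m pi) is a linear statistic
  sum_t u_t (R_t - pi_t) / n, whose variance is the quadratic form of D at the vector (u_t pi_t)_t /n.
  It is at most |||D|||_2 sum_t (u_t pi_t)^2 / n^2 = O(|||D|||_2 / n) under fourth moments, and at
  most max_t (u_t pi_t)^2 ||D||_1 / n^2 for bounded data. Chebyshev's inequality and a union bound
  over the finitely many entries give the rates.
*)
theory Submission
  imports Defs "Jordan_Normal_Form.Determinant"
begin

unbundle no vec_syntax

section \<open>Quadratic forms\<close>

definition quad_form :: "nat \<Rightarrow> (nat \<Rightarrow> nat \<Rightarrow> real) \<Rightarrow> (nat \<Rightarrow> real) \<Rightarrow> real" where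
  "quad_form d A f = (\<Sum>r<d. \<Sum>s<d. f r * A r s * f s)"

definition bilin_form :: "nat \<Rightarrow> (nat \<Rightarrow> nat \<Rightarrow> real) \<Rightarrow> (nat \<Rightarrow> real) \<Rightarrow> (nat \<Rightarrow> real) \<Rightarrow> real" where
  "bilin_form d A g f = (\<Sum>r<d. \<Sum>s<d. g r * A r s * f s)"

definition sq_norm :: "nat \<Rightarrow> (nat \<Rightarrow> real) \<Rightarrow> real" where
  "sq_norm d f = (\<Sum>r<d. (f r)\<^sup>2)"

definition coercive :: "nat \<Rightarrow> (nat \<Rightarrow> nat \<Rightarrow> real) \<Rightarrow> real \<Rightarrow> bool" where
  "coercive d A \<kappa> \<longleftrightarrow> (\<forall>f. quad_form d A f \<ge> \<kappa> * sq_norm d f)"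

lemma sq_norm_nonneg: "sq_norm d f \<ge> 0"
  unfolding sq_norm_def by (rule sum_nonneg) simp

lemma sq_norm_cong: "(\<And>r. r < d \<Longrightarrow> f r = g r) \<Longrightarrow> sq_norm d f = sq_norm d g"
  unfolding sq_norm_def by (intro sum.cong refl) auto

lemma quad_form_cong: "(\<And>r s. r < d \<Longrightarrow> s < d \<Longrightarrow> A r s = B r s) \<Longrightarrow> quad_form d A f = quad_form d B f"
  unfolding quad_form_def by (intro sum.cong refl) auto

lemma quad_form_divide: "quad_form d (\<lambda>r s. A r s / c) f = quad_form d A f / c"
  unfolding quad_form_def by (simp add: sum_divide_distrib)

lemma sum_abs_squared_le_sq_norm: "(\<Sum>r<d. \<bar>f r\<bar>)\<^sup>2 \<le> real d * sq_norm d f"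
  using Cauchy_Schwarz_ineq_sum[of "\<lambda>_. 1" "\<lambda>r. \<bar>f r\<bar>" "{..<d}"] by (simp add: sq_norm_def)

lemma sum_abs_le_sqrt_sq_norm: "(\<Sum>r<d. \<bar>f r\<bar>) \<le> sqrt (real d) * sqrt (sq_norm d f)"
  using real_sqrt_le_mono[OF sum_abs_squared_le_sq_norm[where d=d and f=f]]
  by (simp add: real_sqrt_mult sum_nonneg)

lemma sum_mult_le_sqrt_sq_norm: "(\<Sum>r<d. f r * g r) \<le> sqrt (sq_norm d f) * sqrt (sq_norm d g)"
proof -
  have "(\<Sum>r<d. f r * g r)\<^sup>2 \<le> sq_norm d f * sq_norm d g"
    unfolding sq_norm_def by (rule Cauchy_Schwarz_ineq_sum)
  then have "\<bar>\<Sum>r<d. f r * g r\<bar> \<le> sqrt (sq_norm d f) * sqrt (sq_norm d g)"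
    by (metis real_sqrt_abs real_sqrt_le_mono real_sqrt_mult)
  then show ?thesis by linarith
qed

lemma quad_form_diff_abs_le:
  assumes "\<And>r s. r < d \<Longrightarrow> s < d \<Longrightarrow> \<bar>A r s - B r s\<bar> \<le> \<eta>"
  shows "\<bar>quad_form d A f - quad_form d B f\<bar> \<le> \<eta> * (\<Sum>r<d. \<bar>f r\<bar>)\<^sup>2"
proof -
  have "\<bar>quad_form d A f - quad_form d B f\<bar> = \<bar>\<Sum>r<d. \<Sum>s<d. f r * (A r s - B r s) * f s\<bar>"
    unfolding quad_form_def sum_subtractf[symmetric]
    by (simp add: right_diff_distrib left_diff_distrib)
  also have "\<dots> \<le> (\<Sum>r<d. \<Sum>s<d. \<bar>f r * (A r s - B r s) * f s\<bar>)"
    by (rule order_trans[OF sum_abs sum_mono[OF sum_abs]])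
  also have "\<dots> \<le> (\<Sum>r<d. \<Sum>s<d. \<eta> * (\<bar>f r\<bar> * \<bar>f s\<bar>))"
  proof (intro sum_mono)
    fix r s assume "r \<in> {..<d}" "s \<in> {..<d}"
    then have "\<bar>A r s - B r s\<bar> * (\<bar>f r\<bar> * \<bar>f s\<bar>) \<le> \<eta> * (\<bar>f r\<bar> * \<bar>f s\<bar>)"
      using assms by (intro mult_right_mono) auto
    then show "\<bar>f r * (A r s - B r s) * f s\<bar> \<le> \<eta> * (\<bar>f r\<bar> * \<bar>f s\<bar>)"
      by (simp add: abs_mult ac_simps)
  qed
  also have "\<dots> = \<eta> * (\<Sum>r<d. \<bar>f r\<bar>)\<^sup>2"
    by (subst power2_eq_square, subst sum_product) (simp add: sum_distrib_left)
  finally show ?thesis .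
qed

lemma coercive_perturb:
  assumes "coercive d A \<kappa>" and close: "\<And>r s. r < d \<Longrightarrow> s < d \<Longrightarrow> \<bar>B r s - A r s\<bar> \<le> \<eta>"
    and "\<eta> \<ge> 0" and small: "real d * \<eta> \<le> \<kappa> / 2"
  shows "coercive d B (\<kappa> / 2)"
  unfolding coercive_def
proof
  fix f
  have "\<bar>quad_form d B f - quad_form d A f\<bar> \<le> \<eta> * (real d * sq_norm d f)"
    using quad_form_diff_abs_le[OF close] sum_abs_squared_le_sq_norm \<open>\<eta> \<ge> 0\<close>
    by (rule order_trans[OF _ mult_left_mono])
  moreover have "(real d * \<eta>) * sq_norm d f \<le> \<kappa> / 2 * sq_norm d f"
    using small sq_norm_nonneg by (rule mult_right_mono)
  moreover have "\<kappa> * sq_norm d f \<le> quad_form d A f"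
    using \<open>coercive d A \<kappa>\<close> unfolding coercive_def by blast
  ultimately show "\<kappa> / 2 * sq_norm d f \<le> quad_form d B f"
    by (simp add: algebra_simps)
qed

lemma coercive_of_coercive_divide:
  assumes "coercive d (\<lambda>r s. A r s / c) \<kappa>" "c > 0"
  shows "coercive d A (c * \<kappa>)"
  using assms unfolding coercive_def quad_form_divide by (simp add: field_simps mult.assoc)

lemma quad_form_of_solution:
  assumes "\<And>r. r < d \<Longrightarrow> (\<Sum>s<d. A r s * b s) = h r"
  shows "quad_form d A b = (\<Sum>r<d. b r * h r)"
proof -
  have "quad_form d A b = (\<Sum>r<d. b r * (\<Sum>s<d. A r s * b s))"
    unfolding quad_form_def by (simp add: sum_distrib_left mult.assoc)
  also have "\<dots> = (\<Sum>r<d. b r * h r)"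
    using assms by simp
  finally show ?thesis .
qed

lemma sqrt_sq_norm_solution_le:
  assumes coer: "coercive d A \<kappa>" and "\<kappa> > 0"
    and sol: "\<And>r. r < d \<Longrightarrow> (\<Sum>s<d. A r s * b s) = h r"
    and bound: "\<And>r. r < d \<Longrightarrow> \<bar>h r\<bar> \<le> H"
  shows "sqrt (sq_norm d b) \<le> H * sqrt (real d) / \<kappa>"
proof (cases "d = 0")
  case True
  then show ?thesis by (simp add: sq_norm_def)
next
  case False
  then have "H \<ge> 0"
    using bound[of 0] by simp
  define E where "E = sqrt (sq_norm d b)"
  have "E \<ge> 0"
    unfolding E_def by (simp add: sq_norm_nonneg)
  have "\<kappa> * E\<^sup>2 \<le> quad_form d A b"
    using coer sq_norm_nonneg unfolding coercive_def E_def by simp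
  also have "\<dots> = (\<Sum>r<d. b r * h r)"
    by (rule quad_form_of_solution[OF sol])
  also have "\<dots> \<le> (\<Sum>r<d. \<bar>b r\<bar> * H)"
  proof (rule sum_mono)
    fix r assume "r \<in> {..<d}"
    then have "\<bar>b r\<bar> * \<bar>h r\<bar> \<le> \<bar>b r\<bar> * H"
      using bound by (simp add: mult_left_mono)
    then show "b r * h r \<le> \<bar>b r\<bar> * H"
      by (metis abs_ge_self abs_mult order_trans)
  qed
  also have "\<dots> = (\<Sum>r<d. \<bar>b r\<bar>) * H"
    by (simp add: sum_distrib_right)
  also have "\<dots> \<le> sqrt (real d) * E * H"
    unfolding E_def using \<open>H \<ge> 0\<close> by (intro mult_right_mono sum_abs_le_sqrt_sq_norm)
  finally have "E * (\<kappa> * E) \<le> E * (H * sqrt (real d))"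
    by (simp add: power2_eq_square ac_simps)
  then have "\<kappa> * E \<le> H * sqrt (real d)"
    using \<open>E \<ge> 0\<close> \<open>H \<ge> 0\<close> \<open>\<kappa> > 0\<close>
    by (cases "E = 0") (simp_all add: mult_le_cancel_left)
  then show ?thesis
    unfolding E_def using \<open>\<kappa> > 0\<close> by (simp add: field_simps)
qed

text \<open>The difference solves \<open>A\<^sub>1 (b\<^sub>1 - b\<^sub>0) = (h\<^sub>1 - h\<^sub>0) - (A\<^sub>1 - A\<^sub>0) b\<^sub>0\<close>, whose right-hand side is
  \<open>O(\<eta> (1 + \<Sum>|b\<^sub>0|))\<close>, and \<open>A\<^sub>1\<close> is still coercive.\<close>

lemma linear_system_perturbation:
  assumes sol0: "\<And>r. r < d \<Longrightarrow> (\<Sum>s<d. A0 r s * b0 s) = h0 r"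
    and sol1: "\<And>r. r < d \<Longrightarrow> (\<Sum>s<d. A1 r s * b1 s) = h1 r"
    and coer: "coercive d A0 \<kappa>" and "\<kappa> > 0"
    and close_A: "\<And>r s. r < d \<Longrightarrow> s < d \<Longrightarrow> \<bar>A1 r s - A0 r s\<bar> \<le> \<eta>"
    and close_h: "\<And>r. r < d \<Longrightarrow> \<bar>h1 r - h0 r\<bar> \<le> \<eta>"
    and "\<eta> \<ge> 0" and small: "real d * \<eta> \<le> \<kappa> / 2"
    and bound_h0: "\<And>r. r < d \<Longrightarrow> \<bar>h0 r\<bar> \<le> H"
  shows "sqrt (sq_norm d (\<lambda>s. b1 s - b0 s)) \<le> 2 * \<eta> * (1 + real d * H / \<kappa>) * sqrt (real d) / \<kappa>"
proof (cases "d = 0")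
  case True
  then show ?thesis by (simp add: sq_norm_def)
next
  case False
  then have "H \<ge> 0"
    using bound_h0[of 0] by simp
  define S0 where "S0 = (\<Sum>s<d. \<bar>b0 s\<bar>)"
  have "S0 \<le> sqrt (real d) * sqrt (sq_norm d b0)"
    unfolding S0_def by (rule sum_abs_le_sqrt_sq_norm)
  also have "\<dots> \<le> sqrt (real d) * (H * sqrt (real d) / \<kappa>)"
    by (intro mult_left_mono sqrt_sq_norm_solution_le[OF coer \<open>\<kappa> > 0\<close> sol0 bound_h0]) auto
  also have "\<dots> = real d * H / \<kappa>"
    by simp
  finally have S0_le: "S0 \<le> real d * H / \<kappa>" .
  have residual: "\<bar>(h1 r - h0 r) - (\<Sum>s<d. (A1 r s - A0 r s) * b0 s)\<bar> \<le> \<eta> * (1 + S0)"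
    if "r < d" for r
  proof -
    have "\<bar>\<Sum>s<d. (A1 r s - A0 r s) * b0 s\<bar> \<le> (\<Sum>s<d. \<eta> * \<bar>b0 s\<bar>)"
      using close_A[OF that] by (intro order_trans[OF sum_abs sum_mono]) (simp add: abs_mult mult_right_mono)
    then show ?thesis
      using close_h[OF that] by (simp add: S0_def sum_distrib_left algebra_simps)
  qed
  have diff_sol: "(\<Sum>s<d. A1 r s * (b1 s - b0 s)) = (h1 r - h0 r) - (\<Sum>s<d. (A1 r s - A0 r s) * b0 s)"
    if "r < d" for r
    using sol0[OF that] sol1[OF that]
    by (simp add: algebra_simps sum_subtractf flip: sum.distrib)
  have "coercive d A1 (\<kappa> / 2)"
    using coer close_A \<open>\<eta> \<ge> 0\<close> small by (rule coercive_perturb)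
  then have "sqrt (sq_norm d (\<lambda>s. b1 s - b0 s)) \<le> \<eta> * (1 + S0) * sqrt (real d) / (\<kappa> / 2)"
    using half_gt_zero[OF \<open>\<kappa> > 0\<close>] diff_sol residual by (rule sqrt_sq_norm_solution_le)
  also have "\<dots> = 2 * \<eta> * (1 + S0) * sqrt (real d) / \<kappa>"
    by simp
  also have "\<dots> \<le> 2 * \<eta> * (1 + real d * H / \<kappa>) * sqrt (real d) / \<kappa>"
    using S0_le \<open>\<eta> \<ge> 0\<close> \<open>\<kappa> > 0\<close> by (intro divide_right_mono mult_right_mono mult_left_mono) auto
  finally show ?thesis .
qed

lemma bilin_form_commute:
  assumes "\<And>r s. r < d \<Longrightarrow> s < d \<Longrightarrow> A r s = A s r"
  shows "bilin_form d A f g = bilin_form d A g f"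
  unfolding bilin_form_def using assms
  by (subst sum.swap) (auto intro!: sum.cong simp: ac_simps)

lemma quad_form_add_scaled:
  "quad_form d A (\<lambda>r. g r + t * f r)
     = quad_form d A g + t * (bilin_form d A g f + bilin_form d A f g) + t\<^sup>2 * quad_form d A f"
proof -
  have "quad_form d A (\<lambda>r. g r + t * f r)
      = (\<Sum>r<d. \<Sum>s<d. g r * A r s * g s + t * (g r * A r s * f s + f r * A r s * g s)
                        + t\<^sup>2 * (f r * A r s * f s))"
    unfolding quad_form_def by (intro sum.cong refl) (simp add: algebra_simps power2_eq_square)
  then show ?thesis
    unfolding quad_form_def bilin_form_def by (simp add: sum.distrib sum_distrib_left distrib_left)
qed

lemma bilin_form_squared_le:
  assumes sym: "\<And>r s. r < d \<Longrightarrow> s < d \<Longrightarrow> A r s = A s r"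
    and psd: "\<And>f. quad_form d A f \<ge> 0"
  shows "(bilin_form d A g f)\<^sup>2 \<le> quad_form d A g * quad_form d A f"
proof -
  define a b c where "a = quad_form d A g" and "b = bilin_form d A g f" and "c = quad_form d A f"
  have nonneg: "a + 2 * t * b + t\<^sup>2 * c \<ge> 0" for t
    using psd[of "\<lambda>r. g r + t * f r"] bilin_form_commute[OF sym, where f=f and g=g]
    unfolding quad_form_add_scaled a_def b_def c_def by simp
  show ?thesis
  proof (cases "c = 0")
    case True
    have "b = 0"
    proof (rule ccontr)
      assume "b \<noteq> 0"
      then show False
        using nonneg[of "- (a + 1) / (2 * b)"] True by (simp add: field_simps)
    qed
    then show ?thesis
      using True unfolding a_def b_def c_def by simp
  next
    case False
    then have "c > 0"
      using psd[of f] unfolding c_def by simp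
    then have "a - b\<^sup>2 / c \<ge> 0"
      using nonneg[of "- b / c"] by (simp add: power2_eq_square field_simps)
    then show ?thesis
      using \<open>c > 0\<close> unfolding a_def b_def c_def by (simp add: field_simps)
  qed
qed

lemma quad_form_gram:
  "quad_form d (\<lambda>r s. \<Sum>t<T. a r t * w t * a s t) f = (\<Sum>t<T. w t * (\<Sum>r<d. a r t * f r)\<^sup>2)"
proof -
  have "(\<Sum>t<T. w t * (\<Sum>r<d. a r t * f r)\<^sup>2) = (\<Sum>t<T. \<Sum>r<d. \<Sum>s<d. f r * (a r t * w t * a s t) * f s)"
    by (simp add: power2_eq_square sum_product sum_distrib_left ac_simps)
  also have "\<dots> = quad_form d (\<lambda>r s. \<Sum>t<T. a r t * w t * a s t) f"
    unfolding quad_form_def sum_distrib_left sum_distrib_right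
    by (subst sum.swap) (simp add: sum.swap[of _ "{..<T}"])
  finally show ?thesis by simp
qed

lemma coercive_weighted_gram:
  assumes weight: "\<And>t. t < T \<Longrightarrow> w t \<ge> c" and "c \<ge> 0"
    and close: "\<And>r s. r < d \<Longrightarrow> s < d \<Longrightarrow> \<bar>(\<Sum>t<T. a r t * a s t) / real n - M r s\<bar> \<le> \<eta>"
    and "\<eta> \<ge> 0" and small: "real d * \<eta> \<le> \<mu> / 2" and coer: "coercive d M \<mu>"
  shows "coercive d (\<lambda>r s. (\<Sum>t<T. a r t * w t * a s t) / real n) (c * (\<mu> / 2))"
  unfolding coercive_def
proof
  fix f
  have "coercive d (\<lambda>r s. (\<Sum>t<T. a r t * a s t) / real n) (\<mu> / 2)"
    using coer close \<open>\<eta> \<ge> 0\<close> small by (rule coercive_perturb)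
  then have "\<mu> / 2 * sq_norm d f \<le> quad_form d (\<lambda>r s. (\<Sum>t<T. a r t * a s t) / real n) f"
    unfolding coercive_def by blast
  then have "\<mu> / 2 * sq_norm d f \<le> (\<Sum>t<T. (\<Sum>r<d. a r t * f r)\<^sup>2) / real n"
    using quad_form_gram[of d a "\<lambda>_. 1" T f] by (simp add: quad_form_divide)
  then have "c * (\<mu> / 2 * sq_norm d f) \<le> c * ((\<Sum>t<T. (\<Sum>r<d. a r t * f r)\<^sup>2) / real n)"
    using \<open>c \<ge> 0\<close> by (rule mult_left_mono)
  then have "c * (\<mu> / 2) * sq_norm d f \<le> (\<Sum>t<T. c * (\<Sum>r<d. a r t * f r)\<^sup>2) / real n"
    by (simp add: sum_distrib_left mult.assoc)
  also have "\<dots> \<le> (\<Sum>t<T. w t * (\<Sum>r<d. a r t * f r)\<^sup>2) / real n"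
    using weight by (intro divide_right_mono sum_mono mult_right_mono) auto
  finally show "c * (\<mu> / 2) * sq_norm d f \<le> quad_form d (\<lambda>r s. (\<Sum>t<T. a r t * w t * a s t) / real n) f"
    unfolding quad_form_divide quad_form_gram .
qed

section \<open>Matrices and norms\<close>

lemma index_mult_mat_vec_sum:
  assumes "G \<in> carrier_mat d d" "v \<in> carrier_vec d" "r < d"
  shows "(G *\<^sub>v v) $ r = (\<Sum>s<d. G $$ (r, s) * v $ s)"
  using assms by (simp add: scalar_prod_def lessThan_atLeast0 mult.commute)

lemma quad_form_eq_scalar_prod:
  assumes "M \<in> carrier_mat d d"
  shows "quad_form d (\<lambda>r s. M $$ (r, s)) f = Matrix.vec d f \<bullet> (M *\<^sub>v Matrix.vec d f)"
proof -
  have "Matrix.vec d f \<bullet> (M *\<^sub>v Matrix.vec d f) = (\<Sum>r<d. f r * (\<Sum>s<d. M $$ (r, s) * f s))"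
    using assms by (simp add: scalar_prod_def lessThan_atLeast0 index_mult_mat_vec_sum[OF assms])
  also have "\<dots> = quad_form d (\<lambda>r s. M $$ (r, s)) f"
    unfolding quad_form_def by (simp add: sum_distrib_left mult.assoc)
  finally show ?thesis by simp
qed

lemma sq_norm_mult_mat_le:
  "sq_norm d (\<lambda>r. \<Sum>s<d. B r s * f s) \<le> (\<Sum>r<d. \<Sum>s<d. (B r s)\<^sup>2) * sq_norm d f"
proof -
  have "sq_norm d (\<lambda>r. \<Sum>s<d. B r s * f s) \<le> (\<Sum>r<d. (\<Sum>s<d. (B r s)\<^sup>2) * sq_norm d f)"
    unfolding sq_norm_def by (intro sum_mono Cauchy_Schwarz_ineq_sum)
  then show ?thesis
    by (simp add: sum_distrib_right)
qed

lemma vnorm_eq_sqrt_sq_norm: "x \<in> carrier_vec d \<Longrightarrow> vnorm x = sqrt (sq_norm d (($) x))"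
  unfolding vnorm_def sq_norm_def by simp

lemma vnorm_nonneg: "vnorm x \<ge> 0"
  unfolding vnorm_def by (simp add: sum_nonneg)

lemma vnorm_smult: "vnorm (c \<cdot>\<^sub>v x) = \<bar>c\<bar> * vnorm x"
  unfolding vnorm_def by (simp add: power_mult_distrib real_sqrt_mult flip: sum_distrib_left)

lemma vnorm_mult_mat_vec_le_frobenius:
  assumes D: "D \<in> carrier_mat d d" and x: "x \<in> carrier_vec d"
  shows "vnorm (D *\<^sub>v x) \<le> sqrt (\<Sum>r<d. \<Sum>s<d. (D $$ (r, s))\<^sup>2) * vnorm x"
proof -
  have "sq_norm d (($) (D *\<^sub>v x)) = sq_norm d (\<lambda>r. \<Sum>s<d. D $$ (r, s) * x $ s)"
    by (intro sq_norm_cong) (rule index_mult_mat_vec_sum[OF D x])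
  also have "\<dots> \<le> (\<Sum>r<d. \<Sum>s<d. (D $$ (r, s))\<^sup>2) * sq_norm d (($) x)"
    by (rule sq_norm_mult_mat_le)
  finally have "sqrt (sq_norm d (($) (D *\<^sub>v x))) \<le> sqrt ((\<Sum>r<d. \<Sum>s<d. (D $$ (r, s))\<^sup>2) * sq_norm d (($) x))"
    by (rule real_sqrt_le_mono)
  then show ?thesis
    unfolding vnorm_eq_sqrt_sq_norm[OF x] vnorm_eq_sqrt_sq_norm[OF mult_mat_vec_carrier[OF D x]]
    by (simp add: real_sqrt_mult)
qed

lemma vnorm_diff_eq_sqrt_sq_norm:
  fixes a b :: "real Matrix.vec"
  assumes "a \<in> carrier_vec d" "b \<in> carrier_vec d"
  shows "vnorm (a - b) = sqrt (sq_norm d (\<lambda>s. a $ s - b $ s))"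
  using assms by (subst vnorm_eq_sqrt_sq_norm[where d=d]) (auto intro!: sq_norm_cong)

lemma spec_norm_bdd_above:
  assumes "D \<in> carrier_mat d d"
  shows "bdd_above {vnorm (D *\<^sub>v v) | v. v \<in> carrier_vec (dim_col D) \<and> vnorm v \<le> 1}"
proof (rule bdd_aboveI, safe)
  fix v :: "real Matrix.vec" assume "v \<in> carrier_vec (dim_col D)" "vnorm v \<le> 1"
  then have "vnorm (D *\<^sub>v v) \<le> sqrt (\<Sum>r<d. \<Sum>s<d. (D $$ (r, s))\<^sup>2) * vnorm v"
    using assms by (intro vnorm_mult_mat_vec_le_frobenius) auto
  also have "\<dots> \<le> sqrt (\<Sum>r<d. \<Sum>s<d. (D $$ (r, s))\<^sup>2)"
    using \<open>vnorm v \<le> 1\<close> by (intro mult_left_le) (auto intro!: sum_nonneg)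
  finally show "vnorm (D *\<^sub>v v) \<le> sqrt (\<Sum>r<d. \<Sum>s<d. (D $$ (r, s))\<^sup>2)" .
qed

lemma spec_norm_nonneg:
  assumes "D \<in> carrier_mat d d"
  shows "spec_norm D \<ge> 0"
proof -
  have "vnorm (D *\<^sub>v 0\<^sub>v d) = 0"
    using assms by (simp add: vnorm_def)
  then have "0 \<in> {vnorm (D *\<^sub>v v) | v. v \<in> carrier_vec (dim_col D) \<and> vnorm v \<le> 1}"
    using assms by (intro CollectI exI[of _ "0\<^sub>v d"]) (simp add: vnorm_def)
  then show ?thesis
    unfolding spec_norm_def using spec_norm_bdd_above[OF assms] by (rule cSup_upper)
qed

lemma vnorm_mult_mat_vec_le_spec_norm:
  assumes D: "D \<in> carrier_mat d d" and x: "x \<in> carrier_vec d"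
  shows "vnorm (D *\<^sub>v x) \<le> spec_norm D * vnorm x"
proof (cases "vnorm x = 0")
  case True
  then show ?thesis
    using vnorm_mult_mat_vec_le_frobenius[OF assms] vnorm_nonneg[of "D *\<^sub>v x"] by simp
next
  case False
  then have "vnorm x > 0"
    using vnorm_nonneg[of x] by simp
  define y where "y = (1 / vnorm x) \<cdot>\<^sub>v x"
  have "vnorm y = 1" and "y \<in> carrier_vec (dim_col D)"
    using \<open>vnorm x > 0\<close> x D unfolding y_def by (simp_all add: vnorm_smult)
  then have "vnorm (D *\<^sub>v y) \<le> spec_norm D"
    unfolding spec_norm_def using spec_norm_bdd_above[OF D] by (intro cSup_upper) auto
  moreover have "vnorm (D *\<^sub>v y) = vnorm (D *\<^sub>v x) / vnorm x"
    using \<open>vnorm x > 0\<close> mult_mat_vec[OF D x] unfolding y_def by (simp add: vnorm_smult)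
  ultimately show ?thesis
    using \<open>vnorm x > 0\<close> by (simp add: field_simps)
qed

lemma quad_form_le_spec_norm:
  assumes D: "D \<in> carrier_mat d d"
  shows "quad_form d (\<lambda>r s. D $$ (r, s)) v \<le> spec_norm D * sq_norm d v"
proof -
  define V where "V = Matrix.vec d v"
  have V: "V \<in> carrier_vec d" and DV: "D *\<^sub>v V \<in> carrier_vec d" and sq_V: "sq_norm d (($) V) = sq_norm d v"
    using D unfolding V_def by (auto intro: sq_norm_cong)
  have "quad_form d (\<lambda>r s. D $$ (r, s)) v = (\<Sum>r<d. V $ r * (D *\<^sub>v V) $ r)"
    using quad_form_eq_scalar_prod[OF D] D unfolding V_def by (simp add: scalar_prod_def lessThan_atLeast0)
  also have "\<dots> \<le> vnorm V * vnorm (D *\<^sub>v V)"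
    unfolding vnorm_eq_sqrt_sq_norm[OF V] vnorm_eq_sqrt_sq_norm[OF DV] by (rule sum_mult_le_sqrt_sq_norm)
  also have "\<dots> \<le> vnorm V * (spec_norm D * vnorm V)"
    by (rule mult_left_mono[OF vnorm_mult_mat_vec_le_spec_norm[OF D V] vnorm_nonneg])
  also have "\<dots> = spec_norm D * (vnorm V)\<^sup>2"
    by (simp add: power2_eq_square)
  also have "(vnorm V)\<^sup>2 = sq_norm d v"
    using vnorm_eq_sqrt_sq_norm[OF V] sq_V sq_norm_nonneg[of d v] by simp
  finally show ?thesis .
qed

lemma quad_form_le_l1_norm:
  assumes D: "D \<in> carrier_mat d d" and bound: "\<And>t. t < d \<Longrightarrow> \<bar>v t\<bar> \<le> F"
  shows "quad_form d (\<lambda>r s. D $$ (r, s)) v \<le> F\<^sup>2 * l1_norm D"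
proof -
  have "quad_form d (\<lambda>r s. D $$ (r, s)) v \<le> (\<Sum>r<d. \<Sum>s<d. F\<^sup>2 * \<bar>D $$ (r, s)\<bar>)"
    unfolding quad_form_def
  proof (intro sum_mono)
    fix r s assume "r \<in> {..<d}" "s \<in> {..<d}"
    then have "\<bar>v r\<bar> * \<bar>v s\<bar> \<le> F * F"
      using bound by (intro mult_mono) (auto intro: order_trans[OF abs_ge_zero])
    then have "\<bar>v r\<bar> * \<bar>v s\<bar> * \<bar>D $$ (r, s)\<bar> \<le> F * F * \<bar>D $$ (r, s)\<bar>"
      by (rule mult_right_mono) simp
    moreover have "v r * D $$ (r, s) * v s \<le> \<bar>v r * D $$ (r, s) * v s\<bar>"
      by (rule abs_ge_self)
    moreover have "\<bar>v r * D $$ (r, s) * v s\<bar> = \<bar>v r\<bar> * \<bar>v s\<bar> * \<bar>D $$ (r, s)\<bar>"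
      by (simp add: abs_mult ac_simps)
    ultimately show "v r * D $$ (r, s) * v s \<le> F\<^sup>2 * \<bar>D $$ (r, s)\<bar>"
      by (simp add: power2_eq_square)
  qed
  also have "\<dots> = F\<^sup>2 * l1_norm D"
    using D unfolding l1_norm_def by (simp add: sum_distrib_left)
  finally show ?thesis .
qed

lemma mp_inverse_eq_inverse:
  assumes A: "A \<in> carrier_mat d d" and B: "B \<in> carrier_mat d d"
    and AB: "A * B = 1\<^sub>m d" and BA: "B * A = 1\<^sub>m d"
  shows "mp_inverse A = B"
  unfolding mp_inverse_def
proof (rule the_equality)
  show "B \<in> carrier_mat (dim_col A) (dim_row A) \<and> A * B * A = A \<and> B * A * B = B \<and>
      transpose_mat (A * B) = A * B \<and> transpose_mat (B * A) = B * A"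
    using A B AB BA by (simp add: left_mult_one_mat right_mult_one_mat)
next
  fix B' assume "B' \<in> carrier_mat (dim_col A) (dim_row A) \<and> A * B' * A = A \<and> B' * A * B' = B' \<and>
      transpose_mat (A * B') = A * B' \<and> transpose_mat (B' * A) = B' * A"
  then have B': "B' \<in> carrier_mat d d" and ABA: "A * B' * A = A"
    using A by auto
  have "B = B * A * B"
    using BA B by (simp add: left_mult_one_mat)
  also have "\<dots> = B * (A * B' * A) * B"
    using ABA by simp
  also have "\<dots> = (B * A) * B' * (A * B)"
    using A B B' by (simp add: assoc_mult_mat[of _ d d _ d _ d])
  also have "\<dots> = B'"
    using AB BA B' by (simp add: left_mult_one_mat right_mult_one_mat)
  finally show "B' = B" by simp
qed

lemma inverse_mat_of_kernel_trivial:
  fixes A :: "real Matrix.mat"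
  assumes A: "A \<in> carrier_mat d d" and ker: "\<And>v. v \<in> carrier_vec d \<Longrightarrow> A *\<^sub>v v = 0\<^sub>v d \<Longrightarrow> v = 0\<^sub>v d"
  obtains B where "B \<in> carrier_mat d d" "A * B = 1\<^sub>m d" "B * A = 1\<^sub>m d"
proof -
  have "det A \<noteq> 0"
    using det_0_iff_vec_prod_zero[OF A] ker by auto
  then have "A \<in> Units (ring_mat TYPE(real) d ())"
    by (rule det_non_zero_imp_unit[OF A])
  then show ?thesis
    using that unfolding Units_def ring_mat_def by auto
qed

lemma kernel_trivial_of_coercive:
  assumes G: "G \<in> carrier_mat d d" and "\<kappa> > 0" and coer: "coercive d (\<lambda>r s. G $$ (r, s)) \<kappa>"
    and v: "v \<in> carrier_vec d" and "G *\<^sub>v v = 0\<^sub>v d"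
  shows "v = 0\<^sub>v d"
proof -
  have "Matrix.vec d (($) v) = v"
    using v by (intro eq_vecI) auto
  then have "quad_form d (\<lambda>r s. G $$ (r, s)) (($) v) = 0"
    using quad_form_eq_scalar_prod[OF G] \<open>G *\<^sub>v v = 0\<^sub>v d\<close> v by simp
  then have "\<kappa> * sq_norm d (($) v) \<le> 0"
    using coer unfolding coercive_def by metis
  then have "sq_norm d (($) v) = 0"
    using \<open>\<kappa> > 0\<close> sq_norm_nonneg[of d "($) v"] by (simp add: mult_le_0_iff)
  then show ?thesis
    using v unfolding sq_norm_def by (intro eq_vecI) (auto simp: sum_nonneg_eq_0_iff)
qed

lemma mp_inverse_solves:
  assumes G: "G \<in> carrier_mat d d" and h: "h \<in> carrier_vec d"
    and ker: "\<And>v. v \<in> carrier_vec d \<Longrightarrow> G *\<^sub>v v = 0\<^sub>v d \<Longrightarrow> v = 0\<^sub>v d"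
  shows "mp_inverse G *\<^sub>v h \<in> carrier_vec d" "G *\<^sub>v (mp_inverse G *\<^sub>v h) = h"
proof -
  obtain B where B: "B \<in> carrier_mat d d" "G * B = 1\<^sub>m d" "B * G = 1\<^sub>m d"
    using inverse_mat_of_kernel_trivial[OF G ker] by blast
  then have "mp_inverse G = B"
    using G by (intro mp_inverse_eq_inverse)
  then show "mp_inverse G *\<^sub>v h \<in> carrier_vec d" "G *\<^sub>v (mp_inverse G *\<^sub>v h) = h"
    using B h G by (simp_all flip: assoc_mult_mat_vec[OF G B(1) h])
qed

lemma pos_def_mat_symmetric:
  assumes "M \<in> carrier_mat d d" "pos_def_mat M" "r < d" "s < d"
  shows "M $$ (r, s) = M $$ (s, r)"
proof -
  have "transpose_mat M = M"
    using \<open>pos_def_mat M\<close> unfolding pos_def_mat_def by blast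
  then show ?thesis
    using assms by (metis carrier_matD index_transpose_mat(1))
qed

lemma pos_def_mat_quad_form_nonneg:
  assumes M: "M \<in> carrier_mat d d" and "pos_def_mat M"
  shows "quad_form d (\<lambda>r s. M $$ (r, s)) f \<ge> 0"
proof (cases "Matrix.vec d f = 0\<^sub>v d")
  case True
  then have "\<And>r. r < d \<Longrightarrow> f r = 0"
    by (metis index_vec index_zero_vec(1))
  then show ?thesis
    unfolding quad_form_def by simp
next
  case False
  then show ?thesis
    using assms unfolding pos_def_mat_def quad_form_eq_scalar_prod[OF M] by (simp add: less_imp_le)
qed

lemma pos_def_mat_kernel_trivial:
  assumes M: "M \<in> carrier_mat d d" and "pos_def_mat M"
    and "v \<in> carrier_vec d" "M *\<^sub>v v = 0\<^sub>v d"
  shows "v = 0\<^sub>v d"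
  using assms unfolding pos_def_mat_def by (metis carrier_matD(1) scalar_prod_right_zero less_irrefl)

text \<open>With \<open>g = M\<^sup>-\<^sup>1 f\<close>, Cauchy--Schwarz for the semi-inner product of \<open>M\<close> gives
  \<open>\<parallel>f\<parallel>\<^sup>4 = \<langle>g, f\<rangle>\<^sub>M\<^sup>2 \<le> \<langle>g, g\<rangle>\<^sub>M \<langle>f, f\<rangle>\<^sub>M\<close> and \<open>\<langle>g, g\<rangle>\<^sub>M = g \<bullet> f \<le> F \<parallel>f\<parallel>\<^sup>2\<close>,
  where \<open>F\<close> is the Frobenius norm of \<open>M\<^sup>-\<^sup>1\<close>.\<close>

lemma sq_norm_le_quad_form_pos_def_mat:
  assumes M: "M \<in> carrier_mat d d" and pd: "pos_def_mat M"
    and B: "B \<in> carrier_mat d d" "M * B = 1\<^sub>m d"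
  shows "sq_norm d f \<le> sqrt (\<Sum>r<d. \<Sum>s<d. (B $$ (r, s))\<^sup>2) * quad_form d (\<lambda>r s. M $$ (r, s)) f"
proof -
  let ?A = "\<lambda>r s. M $$ (r, s)"
  define F where "F = sqrt (\<Sum>r<d. \<Sum>s<d. (B $$ (r, s))\<^sup>2)"
  define g where "g r = (\<Sum>s<d. B $$ (r, s) * f s)" for r
  have "F \<ge> 0"
    unfolding F_def by (auto intro!: sum_nonneg)
  have "M *\<^sub>v (B *\<^sub>v Matrix.vec d f) = Matrix.vec d f"
    using B M by (simp flip: assoc_mult_mat_vec)
  moreover have "(B *\<^sub>v Matrix.vec d f) $ s = g s" if "s < d" for s
    using index_mult_mat_vec_sum[OF B(1) _ that, of "Matrix.vec d f"] unfolding g_def by simp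
  ultimately have sol: "(\<Sum>s<d. ?A r s * g s) = f r" if "r < d" for r
    using index_mult_mat_vec_sum[OF M _ that, of "B *\<^sub>v Matrix.vec d f"] B(1) that by simp
  have "bilin_form d ?A g f = (\<Sum>s<d. f s * (\<Sum>r<d. ?A s r * g r))"
    unfolding bilin_form_def
    by (subst sum.swap) (auto intro!: sum.cong simp: sum_distrib_left pos_def_mat_symmetric[OF M pd] ac_simps)
  also have "\<dots> = sq_norm d f"
    using sol by (simp add: sq_norm_def power2_eq_square)
  finally have bilin: "bilin_form d ?A g f = sq_norm d f" .
  have "sqrt (sq_norm d g) \<le> F * sqrt (sq_norm d f)"
    using real_sqrt_le_mono[OF sq_norm_mult_mat_le[of d "\<lambda>r s. B $$ (r, s)" f]]
    unfolding F_def g_def by (simp add: real_sqrt_mult)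
  have "quad_form d ?A g = (\<Sum>r<d. g r * f r)"
    using sol by (rule quad_form_of_solution)
  also have "\<dots> \<le> sqrt (sq_norm d g) * sqrt (sq_norm d f)"
    by (rule sum_mult_le_sqrt_sq_norm)
  also have "\<dots> \<le> F * sqrt (sq_norm d f) * sqrt (sq_norm d f)"
    using \<open>sqrt (sq_norm d g) \<le> F * sqrt (sq_norm d f)\<close> by (rule mult_right_mono) (simp add: sq_norm_nonneg)
  also have "\<dots> = F * sq_norm d f"
    using sq_norm_nonneg[of d f] by (simp add: mult.assoc)
  finally have qf_g: "quad_form d ?A g \<le> F * sq_norm d f" .
  have "(bilin_form d ?A g f)\<^sup>2 \<le> quad_form d ?A g * quad_form d ?A f"
    using pos_def_mat_symmetric[OF M pd] pos_def_mat_quad_form_nonneg[OF M pd]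
    by (rule bilin_form_squared_le)
  also have "\<dots> \<le> F * sq_norm d f * quad_form d ?A f"
    using qf_g pos_def_mat_quad_form_nonneg[OF M pd] by (rule mult_right_mono)
  finally have "(sq_norm d f)\<^sup>2 \<le> F * sq_norm d f * quad_form d ?A f"
    unfolding bilin .
  then show ?thesis
    using sq_norm_nonneg[of d f] pos_def_mat_quad_form_nonneg[OF M pd, of f] \<open>F \<ge> 0\<close>
    unfolding F_def[symmetric] by (cases "sq_norm d f = 0") (auto simp: power2_eq_square mult.assoc)
qed

lemma coercive_of_pos_def_mat:
  assumes M: "M \<in> carrier_mat d d" and pd: "pos_def_mat M"
  obtains \<mu> where "\<mu> > 0" "coercive d (\<lambda>r s. M $$ (r, s)) \<mu>"
proof -
  obtain B where B: "B \<in> carrier_mat d d" "M * B = 1\<^sub>m d"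
    using inverse_mat_of_kernel_trivial[OF M pos_def_mat_kernel_trivial[OF M pd]] by blast
  define F where "F = sqrt (\<Sum>r<d. \<Sum>s<d. (B $$ (r, s))\<^sup>2)"
  have "F \<ge> 0"
    unfolding F_def by (auto intro!: sum_nonneg)
  have "sq_norm d f \<le> (F + 1) * quad_form d (\<lambda>r s. M $$ (r, s)) f" for f
    using sq_norm_le_quad_form_pos_def_mat[OF M pd B, of f] pos_def_mat_quad_form_nonneg[OF M pd, of f]
    unfolding F_def by (simp add: distrib_right)
  then have "coercive d (\<lambda>r s. M $$ (r, s)) (1 / (F + 1))"
    unfolding coercive_def using \<open>F \<ge> 0\<close> by (simp add: field_simps)
  moreover have "1 / (F + 1) > 0"
    using \<open>F \<ge> 0\<close> by simp
  ultimately show ?thesis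
    using that by blast
qed

section \<open>Second moments of assignment fluctuations\<close>

lemma prob_abs_gt_le_second_moment:
  fixes Z :: "'a \<Rightarrow> real"
  assumes bounded: "\<And>z. \<bar>Z z\<bar> \<le> Bd"
    and moment: "measure_pmf.expectation Q (\<lambda>z. (Z z)\<^sup>2) \<le> K * \<delta>"
    and "\<delta> \<ge> 0" "\<tau> > 0" "K \<ge> 0"
  shows "measure_pmf.prob Q {z. \<bar>Z z\<bar> > \<tau> * sqrt \<delta>} \<le> K / \<tau>\<^sup>2"
proof -
  have int: "integrable (measure_pmf Q) (\<lambda>z. (Z z)\<^sup>2)"
  proof (intro measure_pmf.integrable_const_bound[where B="Bd\<^sup>2"] AE_I2)
    fix z
    have "\<bar>Z z\<bar>\<^sup>2 \<le> Bd\<^sup>2"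
      using bounded[of z] by (intro power_mono) auto
    then show "norm ((Z z)\<^sup>2) \<le> Bd\<^sup>2"
      by simp
  qed simp
  show ?thesis
  proof (cases "\<delta> = 0")
    case False
    then have "\<tau>\<^sup>2 * \<delta> > 0"
      using \<open>\<delta> \<ge> 0\<close> \<open>\<tau> > 0\<close> by simp
    have "{z. \<bar>Z z\<bar> > \<tau> * sqrt \<delta>} \<subseteq> {z \<in> space (measure_pmf Q). \<tau>\<^sup>2 * \<delta> \<le> (Z z)\<^sup>2}"
    proof safe
      fix z assume "\<tau> * sqrt \<delta> < \<bar>Z z\<bar>"
      then have "(\<tau> * sqrt \<delta>)\<^sup>2 < \<bar>Z z\<bar>\<^sup>2"
        using \<open>\<delta> \<ge> 0\<close> \<open>\<tau> > 0\<close> by (intro power_strict_mono) auto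
      then show "\<tau>\<^sup>2 * \<delta> \<le> (Z z)\<^sup>2"
        using \<open>\<delta> \<ge> 0\<close> by (simp add: power_mult_distrib)
    qed simp
    then have "measure_pmf.prob Q {z. \<bar>Z z\<bar> > \<tau> * sqrt \<delta>}
        \<le> measure_pmf.prob Q {z \<in> space (measure_pmf Q). \<tau>\<^sup>2 * \<delta> \<le> (Z z)\<^sup>2}"
      by (rule measure_pmf.finite_measure_mono) simp
    also have "\<dots> \<le> measure_pmf.expectation Q (\<lambda>z. (Z z)\<^sup>2) / (\<tau>\<^sup>2 * \<delta>)"
      by (rule integral_Markov_inequality_measure[OF int _ _ \<open>\<tau>\<^sup>2 * \<delta> > 0\<close>, where A=UNIV]) auto
    also have "\<dots> \<le> K * \<delta> / (\<tau>\<^sup>2 * \<delta>)"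
      using moment \<open>\<tau>\<^sup>2 * \<delta> > 0\<close> by (intro divide_right_mono) auto
    also have "\<dots> = K / \<tau>\<^sup>2"
      using False by simp
    finally show ?thesis .
  next
    case True
    have "measure_pmf.expectation Q (\<lambda>z. (Z z)\<^sup>2) \<le> 0"
      using moment True by simp
    moreover have "measure_pmf.expectation Q (\<lambda>z. (Z z)\<^sup>2) \<ge> 0"
      by (rule integral_nonneg_AE) simp
    ultimately have "measure_pmf.expectation Q (\<lambda>z. (Z z)\<^sup>2) = 0"
      by linarith
    then have "\<forall>z\<in>set_pmf Q. Z z = 0"
      using integral_nonneg_eq_0_iff_AE[OF int] by (simp add: AE_measure_pmf_iff)
    then have "measure_pmf.prob Q {z. \<bar>Z z\<bar> > \<tau> * sqrt \<delta>} = 0"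
      using True by (subst measure_pmf_zero_iff) auto
    then show ?thesis
      using \<open>K \<ge> 0\<close> by simp
  qed
qed

lemma expectation_sum_squared:
  fixes g :: "nat \<Rightarrow> 'a \<Rightarrow> real"
  assumes int: "\<And>t t'. integrable (measure_pmf Q) (\<lambda>z. g t z * g t' z)"
  shows "measure_pmf.expectation Q (\<lambda>z. (\<Sum>t<T. v t * g t z)\<^sup>2)
    = (\<Sum>t<T. \<Sum>t'<T. v t * measure_pmf.expectation Q (\<lambda>z. g t z * g t' z) * v t')"
proof -
  have "(\<lambda>z. (\<Sum>t<T. v t * g t z)\<^sup>2) = (\<lambda>z. \<Sum>t<T. \<Sum>t'<T. v t * v t' * (g t z * g t' z))"
    by (simp add: power2_eq_square sum_product ac_simps)
  then show ?thesis
    using int by (simp add: Bochner_Integration.integral_sum integrable_sum ac_simps)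
qed

lemma Rind_cases: "Rind z a i = 0 \<or> Rind z a i = 1"
  unfolding Rind_def by auto

text \<open>Since \<open>E[R/\<pi>] = 1\<close>, \<open>R - \<pi> = \<pi> (R/\<pi> - E[R/\<pi>])\<close>, and \<open>Dmat\<close> is the covariance matrix of the
  centred weights \<open>R/\<pi> - E[R/\<pi>]\<close>.\<close>

lemma expectation_sum_centred_Rind_squared:
  fixes Q :: "(nat \<Rightarrow> nat) pmf"
  assumes pos: "\<And>t. t < k * n \<Longrightarrow> piP Q (t div n) (t mod n) > 0"
  shows "measure_pmf.expectation Q
      (\<lambda>z. (\<Sum>t<k * n. u t * (Rind z (t div n) (t mod n) - piP Q (t div n) (t mod n)))\<^sup>2)
    = quad_form (k * n) (\<lambda>t t'. Dmat k n Q $$ (t, t')) (\<lambda>t. u t * piP Q (t div n) (t mod n))"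
proof -
  define \<pi> where "\<pi> t = piP Q (t div n) (t mod n)" for t
  define w where "w t z = Rind z (t div n) (t mod n) / \<pi> t" for t z
  define g where "g t z = w t z - measure_pmf.expectation Q (w t)" for t z
  have int_Rind: "integrable (measure_pmf Q) (\<lambda>z. Rind z a i)" for a i
  proof (intro measure_pmf.integrable_const_bound[where B=1] AE_I2)
    show "norm (Rind z a i) \<le> 1" for z
      using Rind_cases[of z a i] by auto
  qed simp
  have bounded_g: "\<bar>g t z\<bar> \<le> \<bar>1 / \<pi> t\<bar> + \<bar>measure_pmf.expectation Q (w t)\<bar>" for t z
  proof -
    have "\<bar>w t z\<bar> \<le> \<bar>1 / \<pi> t\<bar>"
      using Rind_cases[of z "t div n" "t mod n"] unfolding w_def by auto
    then show ?thesis
      using abs_triangle_ineq4[of "w t z" "measure_pmf.expectation Q (w t)"] unfolding g_def by linarith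
  qed
  have int_g: "integrable (measure_pmf Q) (\<lambda>z. g t z * g t' z)" for t t'
  proof (intro measure_pmf.integrable_const_bound AE_I2)
    fix z
    show "norm (g t z * g t' z)
        \<le> (\<bar>1 / \<pi> t\<bar> + \<bar>measure_pmf.expectation Q (w t)\<bar>) * (\<bar>1 / \<pi> t'\<bar> + \<bar>measure_pmf.expectation Q (w t')\<bar>)"
      unfolding real_norm_def abs_mult by (intro mult_mono bounded_g) auto
  qed simp
  have centred: "Rind z (t div n) (t mod n) - \<pi> t = \<pi> t * g t z" if "t < k * n" for t z
  proof -
    have "measure_pmf.expectation Q (w t) = 1"
      using pos[OF that] unfolding w_def \<pi>_def piP_def by simp
    then show ?thesis
      using pos[OF that] unfolding g_def w_def \<pi>_def by (simp add: field_simps)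
  qed
  have "measure_pmf.expectation Q (\<lambda>z. (\<Sum>t<k * n. u t * (Rind z (t div n) (t mod n) - \<pi> t))\<^sup>2)
      = measure_pmf.expectation Q (\<lambda>z. (\<Sum>t<k * n. (u t * \<pi> t) * g t z)\<^sup>2)"
    by (simp add: centred mult.assoc)
  also have "\<dots> = (\<Sum>t<k * n. \<Sum>t'<k * n. (u t * \<pi> t) * measure_pmf.expectation Q (\<lambda>z. g t z * g t' z) * (u t' * \<pi> t'))"
    using int_g by (rule expectation_sum_squared)
  also have "\<dots> = quad_form (k * n) (\<lambda>t t'. Dmat k n Q $$ (t, t')) (\<lambda>t. u t * \<pi> t)"
    unfolding quad_form_def by (intro sum.cong refl) (simp add: Dmat_def Let_def g_def w_def[abs_def] \<pi>_def)
  finally show ?thesis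
    unfolding \<pi>_def .
qed

definition fluct :: "nat \<Rightarrow> nat \<Rightarrow> (nat \<Rightarrow> nat) pmf \<Rightarrow> (nat \<Rightarrow> real) \<Rightarrow> (nat \<Rightarrow> nat) \<Rightarrow> real" where
  "fluct k n Q u z = (\<Sum>t<k * n. u t * (Rind z (t div n) (t mod n) - piP Q (t div n) (t mod n))) / real n"

lemma abs_fluct_le:
  assumes "\<And>t. t < k * n \<Longrightarrow> 0 \<le> piP Q (t div n) (t mod n) \<and> piP Q (t div n) (t mod n) \<le> 1"
  shows "\<bar>fluct k n Q u z\<bar> \<le> (\<Sum>t<k * n. \<bar>u t\<bar>) / real n"
proof -
  have "\<bar>u t * (Rind z (t div n) (t mod n) - piP Q (t div n) (t mod n))\<bar> \<le> \<bar>u t\<bar>" if "t < k * n" for t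
  proof -
    have "\<bar>Rind z (t div n) (t mod n) - piP Q (t div n) (t mod n)\<bar> \<le> 1"
      using Rind_cases[of z "t div n" "t mod n"] assms[OF that] by auto
    then show ?thesis
      unfolding abs_mult by (simp add: mult_left_le)
  qed
  then have "\<bar>\<Sum>t<k * n. u t * (Rind z (t div n) (t mod n) - piP Q (t div n) (t mod n))\<bar> \<le> (\<Sum>t<k * n. \<bar>u t\<bar>)"
    by (intro order_trans[OF sum_abs sum_mono]) auto
  then show ?thesis
    unfolding fluct_def by (simp add: divide_right_mono)
qed

lemma expectation_fluct_squared:
  assumes "\<And>t. t < k * n \<Longrightarrow> piP Q (t div n) (t mod n) > 0"
  shows "measure_pmf.expectation Q (\<lambda>z. (fluct k n Q u z)\<^sup>2)
    = quad_form (k * n) (\<lambda>t t'. Dmat k n Q $$ (t, t')) (\<lambda>t. u t * piP Q (t div n) (t mod n)) / (real n)\<^sup>2"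
  using expectation_sum_centred_Rind_squared[OF assms, where u=u] by (simp add: fluct_def power_divide)

lemma expectation_fluct_squared_le_spec_norm:
  assumes "\<And>t. t < k * n \<Longrightarrow> piP Q (t div n) (t mod n) > 0"
  shows "measure_pmf.expectation Q (\<lambda>z. (fluct k n Q u z)\<^sup>2)
    \<le> spec_norm (Dmat k n Q) * sq_norm (k * n) (\<lambda>t. u t * piP Q (t div n) (t mod n)) / (real n)\<^sup>2"
  using quad_form_le_spec_norm[of "Dmat k n Q" "k * n" "\<lambda>t. u t * piP Q (t div n) (t mod n)"]
  by (simp add: expectation_fluct_squared[OF assms] Dmat_def divide_right_mono)

lemma expectation_fluct_squared_le_l1_norm:
  assumes "\<And>t. t < k * n \<Longrightarrow> piP Q (t div n) (t mod n) > 0"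
    and "\<And>t. t < k * n \<Longrightarrow> \<bar>u t * piP Q (t div n) (t mod n)\<bar> \<le> F"
  shows "measure_pmf.expectation Q (\<lambda>z. (fluct k n Q u z)\<^sup>2) \<le> F\<^sup>2 * l1_norm (Dmat k n Q) / (real n)\<^sup>2"
  using quad_form_le_l1_norm[of "Dmat k n Q" "k * n" "\<lambda>t. u t * piP Q (t div n) (t mod n)", OF _ assms(2)]
  by (simp add: expectation_fluct_squared[OF assms(1)] Dmat_def divide_right_mono)

text \<open>Coercivity makes both matrices invertible, so the Moore--Penrose inverses solve the systems.\<close>

lemma mp_inverse_solution_perturbation:
  fixes G0 G1 :: "real Matrix.mat" and h0 h1 :: "real Matrix.vec"
  assumes G0: "G0 \<in> carrier_mat d d" and G1: "G1 \<in> carrier_mat d d"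
    and h0: "h0 \<in> carrier_vec d" and h1: "h1 \<in> carrier_vec d" and "c > 0"
    and coer: "coercive d (\<lambda>r s. G0 $$ (r, s) / c) \<kappa>" and "\<kappa> > 0"
    and close_G: "\<And>r s. r < d \<Longrightarrow> s < d \<Longrightarrow> \<bar>G1 $$ (r, s) / c - G0 $$ (r, s) / c\<bar> \<le> \<eta>"
    and close_h: "\<And>r. r < d \<Longrightarrow> \<bar>h1 $ r / c - h0 $ r / c\<bar> \<le> \<eta>"
    and "\<eta> \<ge> 0" and small: "real d * \<eta> \<le> \<kappa> / 2"
    and bound_h0: "\<And>r. r < d \<Longrightarrow> \<bar>h0 $ r / c\<bar> \<le> H"
  shows "vnorm (mp_inverse G1 *\<^sub>v h1 - mp_inverse G0 *\<^sub>v h0) \<le> 2 * \<eta> * (1 + real d * H / \<kappa>) * sqrt (real d) / \<kappa>"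
proof -
  have coer1: "coercive d (\<lambda>r s. G1 $$ (r, s) / c) (\<kappa> / 2)"
    using coer close_G \<open>\<eta> \<ge> 0\<close> small by (rule coercive_perturb)
  have solves: "mp_inverse G *\<^sub>v h \<in> carrier_vec d"
      "\<And>r. r < d \<Longrightarrow> (\<Sum>s<d. G $$ (r, s) / c * (mp_inverse G *\<^sub>v h) $ s) = h $ r / c"
    if G: "G \<in> carrier_mat d d" and h: "h \<in> carrier_vec d" and "\<kappa>' > 0"
      and coer': "coercive d (\<lambda>r s. G $$ (r, s) / c) \<kappa>'" for G h \<kappa>'
  proof -
    have "coercive d (\<lambda>r s. G $$ (r, s)) (c * \<kappa>')"
      using coer' \<open>c > 0\<close> by (rule coercive_of_coercive_divide)
    then have ker: "\<And>v. v \<in> carrier_vec d \<Longrightarrow> G *\<^sub>v v = 0\<^sub>v d \<Longrightarrow> v = 0\<^sub>v d"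
      using G \<open>c > 0\<close> \<open>\<kappa>' > 0\<close> kernel_trivial_of_coercive by (metis mult_pos_pos)
    show "mp_inverse G *\<^sub>v h \<in> carrier_vec d"
      by (rule mp_inverse_solves(1)[OF G h ker])
    fix r assume "r < d"
    then show "(\<Sum>s<d. G $$ (r, s) / c * (mp_inverse G *\<^sub>v h) $ s) = h $ r / c"
      using index_mult_mat_vec_sum[OF G mp_inverse_solves(1)[OF G h ker] \<open>r < d\<close>]
        mp_inverse_solves(2)[OF G h ker]
      by (simp add: sum_divide_distrib)
  qed
  let ?b0 = "mp_inverse G0 *\<^sub>v h0" and ?b1 = "mp_inverse G1 *\<^sub>v h1"
  have "sqrt (sq_norm d (\<lambda>s. ?b1 $ s - ?b0 $ s)) \<le> 2 * \<eta> * (1 + real d * H / \<kappa>) * sqrt (real d) / \<kappa>"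
    by (rule linear_system_perturbation[OF solves(2)[OF G0 h0 \<open>\<kappa> > 0\<close> coer]
          solves(2)[OF G1 h1 _ coer1] coer \<open>\<kappa> > 0\<close> close_G close_h \<open>\<eta> \<ge> 0\<close> small bound_h0])
       (use \<open>\<kappa> > 0\<close> in simp_all)
  moreover have "?b0 \<in> carrier_vec d" "?b1 \<in> carrier_vec d"
    using solves(1)[OF G0 h0 \<open>\<kappa> > 0\<close> coer] solves(1)[OF G1 h1 _ coer1] \<open>\<kappa> > 0\<close> by simp_all
  ultimately show ?thesis
    by (simp add: vnorm_diff_eq_sqrt_sq_norm)
qed

section \<open>The weighted least squares estimator\<close>

lemma sum_lessThan_mult_div_mod:
  fixes k n :: nat
  shows "(\<Sum>t<k * n. g (t div n) (t mod n)) = (\<Sum>a<k. \<Sum>i<n. (g a i :: 'a :: comm_monoid_add))"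
proof -
  have "(\<Sum>t<k * n. g (t div n) (t mod n)) = (\<Sum>a<k. \<Sum>t\<in>{a * n..<a * n + n}. g (t div n) (t mod n))"
    by (rule sum.nat_group[symmetric])
  also have "\<dots> = (\<Sum>a<k. \<Sum>i<n. g a i)"
  proof (rule sum.cong[OF refl])
    fix a
    have "(\<Sum>t\<in>{a * n..<a * n + n}. g (t div n) (t mod n)) = (\<Sum>i\<in>{0..<n}. g ((i + a * n) div n) ((i + a * n) mod n))"
      using sum.shift_bounds_nat_ivl[of "\<lambda>t. g (t div n) (t mod n)" 0 "a * n" n] by (simp add: add.commute)
    also have "\<dots> = (\<Sum>i<n. g a i)"
      by (rule sum.cong) auto
    finally show "(\<Sum>t\<in>{a * n..<a * n + n}. g (t div n) (t mod n)) = (\<Sum>i<n. g a i)" .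
  qed
  finally show ?thesis .
qed

lemma div_mod_less_of_less_mult:
  assumes "t < k * n"
  shows "t div n < k" "t mod n < (n::nat)"
  using assms by (cases "n = 0"; simp add: less_mult_imp_div_less)+

definition design_entry :: "nat \<Rightarrow> nat \<Rightarrow> (nat \<Rightarrow> nat \<Rightarrow> real) \<Rightarrow> nat \<Rightarrow> nat \<Rightarrow> real" where
  "design_entry k n X r t = (if r < k then (if t div n = r then 1 else 0) else X (t mod n) (r - k))"

definition gram :: "nat \<Rightarrow> nat \<Rightarrow> nat \<Rightarrow> (nat \<Rightarrow> nat \<Rightarrow> real) \<Rightarrow> (nat \<Rightarrow> nat \<Rightarrow> real) \<Rightarrow> real Matrix.mat" where
  "gram k p n X w = transpose_mat (design_x k p n X) * diag_kn k n w * design_x k p n X"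

definition weighted_moment :: "nat \<Rightarrow> nat \<Rightarrow> nat \<Rightarrow> (nat \<Rightarrow> nat \<Rightarrow> real) \<Rightarrow> (nat \<Rightarrow> nat \<Rightarrow> real)
    \<Rightarrow> (nat \<Rightarrow> nat \<Rightarrow> real) \<Rightarrow> real Matrix.vec" where
  "weighted_moment k p n X w y = transpose_mat (design_x k p n X) * diag_kn k n w *\<^sub>v vec_kn k n y"

definition wls :: "nat \<Rightarrow> nat \<Rightarrow> nat \<Rightarrow> (nat \<Rightarrow> nat \<Rightarrow> real) \<Rightarrow> (nat \<Rightarrow> nat \<Rightarrow> real)
    \<Rightarrow> (nat \<Rightarrow> nat \<Rightarrow> real) \<Rightarrow> real Matrix.vec" where
  "wls k p n X w y = mp_inverse (gram k p n X w) *\<^sub>v weighted_moment k p n X w y"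

lemma design_x_index [simp]:
  "t < k * n \<Longrightarrow> r < k + p \<Longrightarrow> design_x k p n X $$ (t, r) = design_entry k n X r t"
  "dim_row (design_x k p n X) = k * n" "dim_col (design_x k p n X) = k + p"
  by (auto simp: design_x_def design_entry_def)

lemma diag_kn_index [simp]:
  "r < k * n \<Longrightarrow> s < k * n \<Longrightarrow> diag_kn k n f $$ (r, s) = (if r = s then f (r div n) (r mod n) else 0)"
  "dim_row (diag_kn k n f) = k * n" "dim_col (diag_kn k n f) = k * n"
  by (auto simp: diag_kn_def)

lemma diag_kn_mult: "diag_kn k n f * diag_kn k n g = diag_kn k n (\<lambda>a i. f a i * g a i)"
proof (rule eq_matI)
  fix r s assume "r < dim_row (diag_kn k n (\<lambda>a i. f a i * g a i))" "s < dim_col (diag_kn k n (\<lambda>a i. f a i * g a i))"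
  then have rs: "r < k * n" "s < k * n"
    by auto
  have "(diag_kn k n f * diag_kn k n g) $$ (r, s)
      = (\<Sum>j\<in>{0..<k * n}. diag_kn k n f $$ (r, j) * diag_kn k n g $$ (j, s))"
    using rs by (simp add: scalar_prod_def del: diag_kn_index(1))
  also have "\<dots> = (\<Sum>j\<in>{0..<k * n}. if j = r then (if r = s then f (r div n) (r mod n) * g (r div n) (r mod n) else 0) else 0)"
    using rs by (intro sum.cong) auto
  finally show "(diag_kn k n f * diag_kn k n g) $$ (r, s) = diag_kn k n (\<lambda>a i. f a i * g a i) $$ (r, s)"
    using rs by simp
qed auto

lemma bhat_eq_wls: "bhat k p n y X m z = wls k p n X (\<lambda>a i. m a i * Rind z a i) y"
  unfolding bhat_def wls_def gram_def weighted_moment_def Let_def diag_kn_mult ..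

lemma btarget_eq_wls: "btarget k p n y X m Q = wls k p n X (\<lambda>a i. m a i * piP Q a i) y"
  unfolding btarget_def wls_def gram_def weighted_moment_def Let_def diag_kn_mult ..

lemma transpose_design_x_mult_diag_kn:
  "transpose_mat (design_x k p n X) * diag_kn k n w
     = Matrix.mat (k + p) (k * n) (\<lambda>(r, t). design_entry k n X r t * w (t div n) (t mod n))"
proof (rule eq_matI)
  fix r t assume "r < dim_row (Matrix.mat (k + p) (k * n) (\<lambda>(r, t). design_entry k n X r t * w (t div n) (t mod n)))"
    "t < dim_col (Matrix.mat (k + p) (k * n) (\<lambda>(r, t). design_entry k n X r t * w (t div n) (t mod n)))"
  then have rt: "r < k + p" "t < k * n"
    by auto
  have "(transpose_mat (design_x k p n X) * diag_kn k n w) $$ (r, t)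
      = (\<Sum>j\<in>{0..<k * n}. design_entry k n X r j * diag_kn k n w $$ (j, t))"
    using rt by (simp add: scalar_prod_def del: diag_kn_index(1))
  also have "\<dots> = (\<Sum>j\<in>{0..<k * n}. if j = t then design_entry k n X r t * w (t div n) (t mod n) else 0)"
    using rt by (intro sum.cong) auto
  finally show "(transpose_mat (design_x k p n X) * diag_kn k n w) $$ (r, t)
      = Matrix.mat (k + p) (k * n) (\<lambda>(r, t). design_entry k n X r t * w (t div n) (t mod n)) $$ (r, t)"
    using rt by simp
qed auto

lemma gram_carrier: "gram k p n X w \<in> carrier_mat (k + p) (k + p)"
  unfolding gram_def by (intro carrier_matI) simp_all

lemma gram_index:
  assumes "r < k + p" "s < k + p"
  shows "gram k p n X w $$ (r, s)
    = (\<Sum>t<k * n. design_entry k n X r t * w (t div n) (t mod n) * design_entry k n X s t)"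
  using assms unfolding gram_def transpose_design_x_mult_diag_kn
  by (simp add: scalar_prod_def lessThan_atLeast0)

lemma weighted_moment_carrier: "weighted_moment k p n X w y \<in> carrier_vec (k + p)"
  unfolding weighted_moment_def by (intro carrier_vecI) simp

lemma weighted_moment_index:
  assumes "r < k + p"
  shows "weighted_moment k p n X w y $ r
    = (\<Sum>t<k * n. design_entry k n X r t * w (t div n) (t mod n) * y (t div n) (t mod n))"
  using assms unfolding weighted_moment_def transpose_design_x_mult_diag_kn
  by (simp add: scalar_prod_def lessThan_atLeast0 vec_kn_def)

lemma design_x_gram_index:
  assumes "r < k + p" "s < k + p"
  shows "(transpose_mat (design_x k p n X) * design_x k p n X) $$ (r, s)
    = (\<Sum>t<k * n. design_entry k n X r t * design_entry k n X s t)"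
  using assms by (simp add: scalar_prod_def lessThan_atLeast0)

lemma sum_weighted_diff_eq_fluct:
  "(\<Sum>t<k * n. a t * (m (t div n) (t mod n) * Rind z (t div n) (t mod n)) * b t) / real n
   - (\<Sum>t<k * n. a t * (m (t div n) (t mod n) * piP Q (t div n) (t mod n)) * b t) / real n
   = fluct k n Q (\<lambda>t. a t * m (t div n) (t mod n) * b t) z"
  unfolding fluct_def diff_divide_distrib[symmetric] sum_subtractf[symmetric]
  by (simp add: algebra_simps)

lemma gram_diff_eq_fluct:
  assumes "r < k + p" "s < k + p"
  shows "gram k p n X (\<lambda>a i. m a i * Rind z a i) $$ (r, s) / real n
      - gram k p n X (\<lambda>a i. m a i * piP Q a i) $$ (r, s) / real n
    = fluct k n Q (\<lambda>t. design_entry k n X r t * m (t div n) (t mod n) * design_entry k n X s t) z"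
  using sum_weighted_diff_eq_fluct[where a="design_entry k n X r" and b="design_entry k n X s" and m=m and z=z and Q=Q]
  unfolding gram_index[OF assms] .

lemma weighted_moment_diff_eq_fluct:
  assumes "r < k + p"
  shows "weighted_moment k p n X (\<lambda>a i. m a i * Rind z a i) y $ r / real n
      - weighted_moment k p n X (\<lambda>a i. m a i * piP Q a i) y $ r / real n
    = fluct k n Q (\<lambda>t. design_entry k n X r t * m (t div n) (t mod n) * y (t div n) (t mod n)) z"
  using sum_weighted_diff_eq_fluct[where a="design_entry k n X r" and b="\<lambda>t. y (t div n) (t mod n)" and m=m and z=z and Q=Q]
  unfolding weighted_moment_index[OF assms] .

lemma sum_design_entry_fourth_le:
  assumes "r < k + p" and moment: "(\<Sum>s<p. \<Sum>i<n. (X i s)^4) \<le> real n * Cm" and "Cm \<ge> 0"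
  shows "(\<Sum>t<k * n. (design_entry k n X r t)^4) \<le> real k * real n * (1 + Cm)"
proof (cases "r < k")
  case True
  then have "(\<Sum>t<k * n. (design_entry k n X r t)^4) \<le> (\<Sum>t<k * n. 1)"
    by (intro sum_mono) (simp add: design_entry_def)
  also have "\<dots> = real k * real n * 1"
    by simp
  also have "\<dots> \<le> real k * real n * (1 + Cm)"
    using \<open>Cm \<ge> 0\<close> by (intro mult_left_mono) auto
  finally show ?thesis .
next
  case False
  then have "r - k < p"
    using \<open>r < k + p\<close> by simp
  have "(\<Sum>t<k * n. (design_entry k n X r t)^4) = (\<Sum>a<k. \<Sum>i<n. (X i (r - k))^4)"
    using False sum_lessThan_mult_div_mod[where g="\<lambda>_ i. (X i (r - k))^4" and k=k and n=n]
    by (simp add: design_entry_def)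
  also have "\<dots> = real k * (\<Sum>i<n. (X i (r - k))^4)"
    by simp
  also have "\<dots> \<le> real k * (\<Sum>s<p. \<Sum>i<n. (X i s)^4)"
    using \<open>r - k < p\<close>
    by (intro mult_left_mono member_le_sum[where f="\<lambda>s. \<Sum>i<n. (X i s)^4"]) (simp_all add: sum_nonneg)
  also have "\<dots> \<le> real k * (real n * Cm)"
    using moment by (intro mult_left_mono) simp_all
  also have "\<dots> \<le> real k * real n * (1 + Cm)"
    by (simp add: algebra_simps)
  finally show ?thesis .
qed

lemma abs_mult_le_fourth_powers: "\<bar>a * b\<bar> \<le> ((a::real)^4 + b^4 + 2) / 4"
proof -
  have "2 * \<bar>a * b\<bar> \<le> a\<^sup>2 + b\<^sup>2"
    using sum_squares_bound[of "\<bar>a\<bar>" "\<bar>b\<bar>"] by (simp add: abs_mult)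
  moreover have "2 * a\<^sup>2 \<le> (a\<^sup>2)\<^sup>2 + 1" "2 * b\<^sup>2 \<le> (b\<^sup>2)\<^sup>2 + 1"
    using sum_squares_bound[of "a\<^sup>2" 1] sum_squares_bound[of "b\<^sup>2" 1] by simp_all
  ultimately have "4 * \<bar>a * b\<bar> \<le> (a\<^sup>2)\<^sup>2 + (b\<^sup>2)\<^sup>2 + 2"
    by linarith
  then show ?thesis
    by (simp flip: power_mult)
qed

lemma squared_mult_le_fourth_powers: "(a * b)\<^sup>2 \<le> ((a::real)^4 + b^4) / 2"
proof -
  have "2 * (a\<^sup>2 * b\<^sup>2) \<le> (a\<^sup>2)\<^sup>2 + (b\<^sup>2)\<^sup>2"
    using sum_squares_bound[of "a\<^sup>2" "b\<^sup>2"] by simp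
  then show ?thesis
    by (simp add: power_mult_distrib flip: power_mult)
qed

lemma sq_norm_weighted_product_le:
  assumes "\<And>t. t < T \<Longrightarrow> \<bar>w t\<bar> \<le> C"
  shows "sq_norm T (\<lambda>t. a t * w t * b t) \<le> C\<^sup>2 * ((\<Sum>t<T. (a t)^4) + (\<Sum>t<T. (b t)^4)) / 2"
proof -
  have "sq_norm T (\<lambda>t. a t * w t * b t) \<le> (\<Sum>t<T. C\<^sup>2 * (((a t)^4 + (b t)^4) / 2))"
    unfolding sq_norm_def
  proof (rule sum_mono)
    fix t assume "t \<in> {..<T}"
    then have "\<bar>w t\<bar>\<^sup>2 \<le> C\<^sup>2"
      using assms by (intro power_mono) auto
    then have "(w t)\<^sup>2 \<le> C\<^sup>2"
      by simp
    then have "(w t)\<^sup>2 * (a t * b t)\<^sup>2 \<le> C\<^sup>2 * (((a t)^4 + (b t)^4) / 2)"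
      by (rule mult_mono[OF _ squared_mult_le_fourth_powers]) auto
    then show "(a t * w t * b t)\<^sup>2 \<le> C\<^sup>2 * (((a t)^4 + (b t)^4) / 2)"
      by (simp add: power_mult_distrib ac_simps)
  qed
  also have "\<dots> = C\<^sup>2 / 2 * (\<Sum>t<T. (a t)^4 + (b t)^4)"
    by (simp add: sum_distrib_left)
  also have "\<dots> = C\<^sup>2 * ((\<Sum>t<T. (a t)^4) + (\<Sum>t<T. (b t)^4)) / 2"
    by (simp add: sum.distrib)
  finally show ?thesis .
qed

lemma abs_sum_weighted_product_le:
  assumes "\<And>t. t < T \<Longrightarrow> \<bar>w t\<bar> \<le> C" and "C \<ge> 0"
  shows "\<bar>\<Sum>t<T. a t * w t * b t\<bar> \<le> C * ((\<Sum>t<T. (a t)^4) + (\<Sum>t<T. (b t)^4) + 2 * real T) / 4"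
proof -
  have "\<bar>\<Sum>t<T. a t * w t * b t\<bar> \<le> (\<Sum>t<T. C * (((a t)^4 + (b t)^4 + 2) / 4))"
  proof (intro order_trans[OF sum_abs sum_mono])
    fix t assume "t \<in> {..<T}"
    then have "\<bar>w t\<bar> * \<bar>a t * b t\<bar> \<le> C * (((a t)^4 + (b t)^4 + 2) / 4)"
      using assms \<open>C \<ge> 0\<close> by (intro mult_mono abs_mult_le_fourth_powers) auto
    then show "\<bar>a t * w t * b t\<bar> \<le> C * (((a t)^4 + (b t)^4 + 2) / 4)"
      by (simp add: abs_mult ac_simps)
  qed
  also have "\<dots> = C / 4 * (\<Sum>t<T. (a t)^4 + (b t)^4 + 2)"
    by (simp add: sum_distrib_left)
  also have "\<dots> = C * ((\<Sum>t<T. (a t)^4) + (\<Sum>t<T. (b t)^4) + 2 * real T) / 4"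
    by (simp add: sum.distrib)
  finally show ?thesis .
qed

text \<open>The random parts of \<open>x' m R x / n\<close> and \<open>x' m R y / n\<close> are the fluctuations \<open>fluct\<close> of the
  weights \<open>x\<^sub>r m v\<close>, where \<open>v\<close> ranges over the columns of \<open>x\<close> and \<open>y\<close>.\<close>

definition data_columns :: "nat \<Rightarrow> nat \<Rightarrow> nat \<Rightarrow> (nat \<Rightarrow> nat \<Rightarrow> real) \<Rightarrow> (nat \<Rightarrow> nat \<Rightarrow> real) \<Rightarrow> (nat \<Rightarrow> real) set" where
  "data_columns k p n X y = insert (\<lambda>t. y (t div n) (t mod n)) (design_entry k n X ` {..<k + p})"

definition fluct_weights :: "nat \<Rightarrow> nat \<Rightarrow> nat \<Rightarrow> (nat \<Rightarrow> nat \<Rightarrow> real) \<Rightarrow> (nat \<Rightarrow> nat \<Rightarrow> real)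
    \<Rightarrow> (nat \<Rightarrow> nat \<Rightarrow> real) \<Rightarrow> (nat \<Rightarrow> real) set" where
  "fluct_weights k p n X m y = (\<lambda>(r, v) t. design_entry k n X r t * m (t div n) (t mod n) * v t)
      ` ({..<k + p} \<times> data_columns k p n X y)"

lemma finite_fluct_weights: "finite (fluct_weights k p n X m y)"
  unfolding fluct_weights_def data_columns_def by simp

lemma card_fluct_weights_le: "card (fluct_weights k p n X m y) \<le> (k + p) * (k + p + 1)"
proof -
  have "card (fluct_weights k p n X m y) \<le> card ({..<k + p} \<times> data_columns k p n X y)"
    unfolding fluct_weights_def by (rule card_image_le) (simp add: data_columns_def)
  also have "\<dots> \<le> (k + p) * (k + p + 1)"
  proof -
    have "card (data_columns k p n X y) \<le> k + p + 1"
      unfolding data_columns_def using card_image_le[of "{..<k + p}" "design_entry k n X"]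
      by (simp add: card_insert_if)
    then show ?thesis
      unfolding card_cartesian_product card_lessThan by (rule mult_left_mono) simp
  qed
  finally show ?thesis .
qed

lemma vnorm_bhat_diff_le:
  fixes Q :: "(nat \<Rightarrow> nat) pmf"
  assumes "n > 0"
    and coer: "coercive (k + p) (\<lambda>r s. gram k p n X (\<lambda>a i. m a i * piP Q a i) $$ (r, s) / real n) \<kappa>"
    and "\<kappa> > 0" and "\<eta> \<ge> 0" and small: "real (k + p) * \<eta> \<le> \<kappa> / 2"
    and bound: "\<And>r. r < k + p \<Longrightarrow> \<bar>weighted_moment k p n X (\<lambda>a i. m a i * piP Q a i) y $ r / real n\<bar> \<le> H"
    and fluct_small: "\<And>u. u \<in> fluct_weights k p n X m y \<Longrightarrow> \<bar>fluct k n Q u z\<bar> \<le> \<eta>"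
  shows "vnorm (bhat k p n y X m z - btarget k p n y X m Q)
    \<le> 2 * \<eta> * (1 + real (k + p) * H / \<kappa>) * sqrt (real (k + p)) / \<kappa>"
  unfolding bhat_eq_wls btarget_eq_wls wls_def
proof (rule mp_inverse_solution_perturbation[OF gram_carrier gram_carrier weighted_moment_carrier
      weighted_moment_carrier _ coer \<open>\<kappa> > 0\<close> _ _ \<open>\<eta> \<ge> 0\<close> small bound])
  show "real n > 0"
    using \<open>n > 0\<close> by simp
  show "\<bar>gram k p n X (\<lambda>a i. m a i * Rind z a i) $$ (r, s) / real n
      - gram k p n X (\<lambda>a i. m a i * piP Q a i) $$ (r, s) / real n\<bar> \<le> \<eta>"
    if "r < k + p" "s < k + p" for r s
    unfolding gram_diff_eq_fluct[OF that] using that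
    by (intro fluct_small) (auto simp: fluct_weights_def data_columns_def)
  show "\<bar>weighted_moment k p n X (\<lambda>a i. m a i * Rind z a i) y $ r / real n
      - weighted_moment k p n X (\<lambda>a i. m a i * piP Q a i) y $ r / real n\<bar> \<le> \<eta>"
    if "r < k + p" for r
    unfolding weighted_moment_diff_eq_fluct[OF that] using that
    by (intro fluct_small) (auto simp: fluct_weights_def data_columns_def)
qed

section \<open>Asymptotics\<close>

lemma prob_vnorm_bhat_diff_gt_le:
  fixes Q :: "(nat \<Rightarrow> nat) pmf"
  assumes "n > 0"
    and coer: "coercive (k + p) (\<lambda>r s. gram k p n X (\<lambda>a i. m a i * piP Q a i) $$ (r, s) / real n) \<kappa>"
    and "\<kappa> > 0" and "\<eta> \<ge> 0" and small: "real (k + p) * \<eta> \<le> \<kappa> / 2"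
    and bound: "\<And>r. r < k + p \<Longrightarrow> \<bar>weighted_moment k p n X (\<lambda>a i. m a i * piP Q a i) y $ r / real n\<bar> \<le> H"
  shows "measure_pmf.prob Q {z. vnorm (bhat k p n y X m z - btarget k p n y X m Q)
        > 2 * \<eta> * (1 + real (k + p) * H / \<kappa>) * sqrt (real (k + p)) / \<kappa>}
    \<le> (\<Sum>u\<in>fluct_weights k p n X m y. measure_pmf.prob Q {z. \<bar>fluct k n Q u z\<bar> > \<eta>})"
proof -
  have "{z. vnorm (bhat k p n y X m z - btarget k p n y X m Q)
        > 2 * \<eta> * (1 + real (k + p) * H / \<kappa>) * sqrt (real (k + p)) / \<kappa>}
      \<subseteq> (\<Union>u\<in>fluct_weights k p n X m y. {z. \<bar>fluct k n Q u z\<bar> > \<eta>})"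
    using vnorm_bhat_diff_le[OF \<open>n > 0\<close> coer \<open>\<kappa> > 0\<close> \<open>\<eta> \<ge> 0\<close> small bound] by (force simp: not_less)
  then have "measure_pmf.prob Q {z. vnorm (bhat k p n y X m z - btarget k p n y X m Q)
        > 2 * \<eta> * (1 + real (k + p) * H / \<kappa>) * sqrt (real (k + p)) / \<kappa>}
      \<le> measure_pmf.prob Q (\<Union>u\<in>fluct_weights k p n X m y. {z. \<bar>fluct k n Q u z\<bar> > \<eta>})"
    by (rule measure_pmf.finite_measure_mono) simp
  also have "\<dots> \<le> (\<Sum>u\<in>fluct_weights k p n X m y. measure_pmf.prob Q {z. \<bar>fluct k n Q u z\<bar> > \<eta>})"
    by (rule measure_UNION_le) (simp_all add: finite_fluct_weights)
  finally show ?thesis .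
qed

lemma data_column_fourth_le:
  assumes "k \<ge> 1" and mom_X: "(\<Sum>s<p. \<Sum>i<n. (X i s)^4) \<le> real n * Cm"
    and mom_y: "(\<Sum>a<k. \<Sum>i<n. (y a i)^4) \<le> real n * Cm" and "Cm \<ge> 0"
    and "v \<in> data_columns k p n X y"
  shows "(\<Sum>t<k * n. (v t)^4) \<le> real k * real n * (1 + Cm)"
proof -
  consider "v = (\<lambda>t. y (t div n) (t mod n))" | r where "r < k + p" "v = design_entry k n X r"
    using \<open>v \<in> data_columns k p n X y\<close> unfolding data_columns_def by auto
  then show ?thesis
  proof cases
    case 1
    have "(\<Sum>t<k * n. (y (t div n) (t mod n))^4) \<le> real n * Cm"
      using mom_y sum_lessThan_mult_div_mod[where g="\<lambda>a i. (y a i)^4" and k=k and n=n] by simp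
    also have "\<dots> \<le> 1 * (real n * (1 + Cm))"
      by (simp add: distrib_left)
    also have "\<dots> \<le> real k * (real n * (1 + Cm))"
      using \<open>k \<ge> 1\<close> \<open>Cm \<ge> 0\<close> by (intro mult_right_mono) auto
    finally show ?thesis
      using 1 by (simp add: mult.assoc)
  next
    case 2
    then show ?thesis
      using mom_X \<open>Cm \<ge> 0\<close> by (simp add: sum_design_entry_fourth_le)
  qed
qed

lemma abs_data_column_le:
  assumes "\<And>s i. s < p \<Longrightarrow> i < n \<Longrightarrow> \<bar>X i s\<bar> \<le> B" and "\<And>a i. a < k \<Longrightarrow> i < n \<Longrightarrow> \<bar>y a i\<bar> \<le> B"
    and "v \<in> data_columns k p n X y" "t < k * n"
  shows "\<bar>v t\<bar> \<le> max 1 B"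
  using assms div_mod_less_of_less_mult[OF \<open>t < k * n\<close>] unfolding data_columns_def design_entry_def
  by (fastforce intro: le_max_iff_disj[THEN iffD2])

lemma sum_le_of_mean_less:
  fixes f :: "nat \<Rightarrow> nat \<Rightarrow> real"
  assumes "(\<Sum>a<k. \<Sum>i<n. f a i) / real n < Cm"
  shows "(\<Sum>a<k. \<Sum>i<n. f a i) \<le> real n * Cm"
  using assms by (cases "n = 0") (simp_all add: pos_divide_less_eq mult.commute)

lemma sum_fourth_le_of_bounded:
  fixes f :: "nat \<Rightarrow> nat \<Rightarrow> real"
  assumes "\<And>a i. a < k \<Longrightarrow> i < n \<Longrightarrow> \<bar>f a i\<bar> \<le> B"
  shows "(\<Sum>a<k. \<Sum>i<n. (f a i)^4) \<le> real n * (real k * B^4)"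
proof -
  have "(\<Sum>a<k. \<Sum>i<n. (f a i)^4) \<le> (\<Sum>a<k. \<Sum>i<n. B^4)"
  proof (intro sum_mono)
    fix a i assume "a \<in> {..<k}" "i \<in> {..<n}"
    then have "\<bar>f a i\<bar>^4 \<le> B^4"
      using assms by (intro power_mono) auto
    then show "(f a i)^4 \<le> B^4"
      by (simp add: power_even_abs)
  qed
  then show ?thesis
    by (simp add: algebra_simps)
qed

locale wls_design =
  fixes k p :: nat and N :: "nat \<Rightarrow> nat" and X m :: "nat \<Rightarrow> nat \<Rightarrow> nat \<Rightarrow> real"
    and P :: "nat \<Rightarrow> (nat \<Rightarrow> nat) pmf" and M :: "real Matrix.mat" and c C :: real
  assumes k_pos: "k \<ge> 1"
    and N_lim: "filterlim N at_top sequentially"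
    and pi_range: "\<And>\<nu> a i. a < k \<Longrightarrow> i < N \<nu> \<Longrightarrow> 0 < piP (P \<nu>) a i \<and> piP (P \<nu>) a i < 1"
    and A2_dim: "M \<in> carrier_mat (k + p) (k + p)"
    and A2_pd: "pos_def_mat M"
    and A2_lim: "\<And>r s. r < k + p \<Longrightarrow> s < k + p \<Longrightarrow>
       ((\<lambda>\<nu>. (transpose_mat (design_x k p (N \<nu>) (X \<nu>)) * design_x k p (N \<nu>) (X \<nu>)) $$ (r, s)
               / real (N \<nu>)) \<longlongrightarrow> M $$ (r, s)) sequentially"
    and A5_c: "0 < c" and A5_cC: "c < C"
    and A5: "\<And>\<nu> a i. a < k \<Longrightarrow> i < N \<nu> \<Longrightarrow>
               c < m \<nu> a i * piP (P \<nu>) a i \<and> m \<nu> a i * piP (P \<nu>) a i < C"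
begin

lemma flat_pi_range:
  "t < k * N \<nu> \<Longrightarrow> 0 < piP (P \<nu>) (t div N \<nu>) (t mod N \<nu>) \<and> piP (P \<nu>) (t div N \<nu>) (t mod N \<nu>) < 1"
  using pi_range div_mod_less_of_less_mult by blast

lemma flat_weight_range:
  "t < k * N \<nu> \<Longrightarrow> c < m \<nu> (t div N \<nu>) (t mod N \<nu>) * piP (P \<nu>) (t div N \<nu>) (t mod N \<nu>)
     \<and> m \<nu> (t div N \<nu>) (t mod N \<nu>) * piP (P \<nu>) (t div N \<nu>) (t mod N \<nu>) < C"
  using A5 div_mod_less_of_less_mult by blast

lemma eventually_design_gram_close:
  assumes "\<eta> > 0"
  shows "eventually (\<lambda>\<nu>. \<forall>r<k + p. \<forall>s<k + p.
      \<bar>(\<Sum>t<k * N \<nu>. design_entry k (N \<nu>) (X \<nu>) r t * design_entry k (N \<nu>) (X \<nu>) s t) / real (N \<nu>)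
        - M $$ (r, s)\<bar> \<le> \<eta>) sequentially" (is "eventually (\<lambda>\<nu>. \<forall>r<k + p. \<forall>s<k + p. ?close \<nu> r s) _")
proof -
  have "eventually (\<lambda>\<nu>. \<forall>rs\<in>{..<k + p} \<times> {..<k + p}.
      \<bar>(\<Sum>t<k * N \<nu>. design_entry k (N \<nu>) (X \<nu>) (fst rs) t * design_entry k (N \<nu>) (X \<nu>) (snd rs) t)
         / real (N \<nu>) - M $$ rs\<bar> < \<eta>) sequentially"
  proof (rule eventually_ball_finite, safe)
    fix r s assume rs: "r < k + p" "s < k + p"
    from A2_lim[OF rs] have "((\<lambda>\<nu>. (\<Sum>t<k * N \<nu>. design_entry k (N \<nu>) (X \<nu>) r t * design_entry k (N \<nu>) (X \<nu>) s t)
        / real (N \<nu>)) \<longlongrightarrow> M $$ (r, s)) sequentially"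
      unfolding design_x_gram_index[OF rs] .
    from tendstoD[OF this \<open>\<eta> > 0\<close>] show "eventually (\<lambda>\<nu>. \<bar>(\<Sum>t<k * N \<nu>. design_entry k (N \<nu>) (X \<nu>) (fst (r, s)) t
        * design_entry k (N \<nu>) (X \<nu>) (snd (r, s)) t) / real (N \<nu>) - M $$ (r, s)\<bar> < \<eta>) sequentially"
      by (simp add: dist_real_def)
  qed simp
  then show ?thesis
  proof eventually_elim
    case (elim \<nu>)
    show ?case
    proof (intro allI impI)
      fix r s assume "r < k + p" "s < k + p"
      then show "?close \<nu> r s"
        using bspec[OF elim, of "(r, s)"] by simp
    qed
  qed
qed

lemma coercive_target_gram:
  assumes close: "\<And>r s. r < k + p \<Longrightarrow> s < k + p \<Longrightarrow>
      \<bar>(\<Sum>t<k * N \<nu>. design_entry k (N \<nu>) (X \<nu>) r t * design_entry k (N \<nu>) (X \<nu>) s t) / real (N \<nu>)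
        - M $$ (r, s)\<bar> \<le> \<eta>"
    and "\<eta> \<ge> 0" and small: "real (k + p) * \<eta> \<le> \<mu> / 2" and coer_M: "coercive (k + p) (\<lambda>r s. M $$ (r, s)) \<mu>"
  shows "coercive (k + p)
    (\<lambda>r s. gram k p (N \<nu>) (X \<nu>) (\<lambda>a i. m \<nu> a i * piP (P \<nu>) a i) $$ (r, s) / real (N \<nu>)) (c * (\<mu> / 2))"
proof -
  have "c \<le> m \<nu> (t div N \<nu>) (t mod N \<nu>) * piP (P \<nu>) (t div N \<nu>) (t mod N \<nu>)" if "t < k * N \<nu>" for t
    using flat_weight_range[OF that] by simp
  then have "coercive (k + p) (\<lambda>r s. (\<Sum>t<k * N \<nu>. design_entry k (N \<nu>) (X \<nu>) r t
      * (m \<nu> (t div N \<nu>) (t mod N \<nu>) * piP (P \<nu>) (t div N \<nu>) (t mod N \<nu>)) * design_entry k (N \<nu>) (X \<nu>) s t)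
      / real (N \<nu>)) (c * (\<mu> / 2))"
    using A5_c close \<open>\<eta> \<ge> 0\<close> small coer_M by (intro coercive_weighted_gram) auto
  moreover have "quad_form (k + p) (\<lambda>r s. gram k p (N \<nu>) (X \<nu>) (\<lambda>a i. m \<nu> a i * piP (P \<nu>) a i) $$ (r, s) / real (N \<nu>)) f
    = quad_form (k + p) (\<lambda>r s. (\<Sum>t<k * N \<nu>. design_entry k (N \<nu>) (X \<nu>) r t
      * (m \<nu> (t div N \<nu>) (t mod N \<nu>) * piP (P \<nu>) (t div N \<nu>) (t mod N \<nu>)) * design_entry k (N \<nu>) (X \<nu>) s t)
      / real (N \<nu>)) f" for f
    by (rule quad_form_cong) (simp add: gram_index)
  ultimately show ?thesis
    unfolding coercive_def by simp
qed

lemma eventually_coercive_gram: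
  obtains \<kappa> where "\<kappa> > 0"
    "eventually (\<lambda>\<nu>. coercive (k + p)
       (\<lambda>r s. gram k p (N \<nu>) (X \<nu>) (\<lambda>a i. m \<nu> a i * piP (P \<nu>) a i) $$ (r, s) / real (N \<nu>)) \<kappa>) sequentially"
proof -
  obtain \<mu> where "\<mu> > 0" and coer_M: "coercive (k + p) (\<lambda>r s. M $$ (r, s)) \<mu>"
    using coercive_of_pos_def_mat[OF A2_dim A2_pd] by blast
  define \<eta> where "\<eta> = \<mu> / (2 * real (k + p))"
  have "real (k + p) > 0"
    using k_pos by simp
  then have "\<eta> > 0" and small: "real (k + p) * \<eta> \<le> \<mu> / 2"
    using \<open>\<mu> > 0\<close> unfolding \<eta>_def by (simp_all add: field_simps)
  have "eventually (\<lambda>\<nu>. coercive (k + p)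
       (\<lambda>r s. gram k p (N \<nu>) (X \<nu>) (\<lambda>a i. m \<nu> a i * piP (P \<nu>) a i) $$ (r, s) / real (N \<nu>)) (c * (\<mu> / 2)))
     sequentially"
    using eventually_design_gram_close[OF \<open>\<eta> > 0\<close>]
  proof eventually_elim
    case (elim \<nu>)
    then show ?case
      using \<open>\<eta> > 0\<close> by (intro coercive_target_gram[OF _ _ small coer_M]) auto
  qed
  moreover have "c * (\<mu> / 2) > 0"
    using A5_c \<open>\<mu> > 0\<close> by simp
  ultimately show ?thesis
    using that by blast
qed

lemma abs_weighted_moment_target_le:
  fixes y :: "nat \<Rightarrow> nat \<Rightarrow> real"
  assumes mom_X: "(\<Sum>s<p. \<Sum>i<N \<nu>. (X \<nu> i s)^4) \<le> real (N \<nu>) * Cm"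
    and mom_y: "(\<Sum>a<k. \<Sum>i<N \<nu>. (y a i)^4) \<le> real (N \<nu>) * Cm"
    and "Cm \<ge> 0" and "N \<nu> > 0" and "r < k + p"
  shows "\<bar>weighted_moment k p (N \<nu>) (X \<nu>) (\<lambda>a i. m \<nu> a i * piP (P \<nu>) a i) y $ r / real (N \<nu>)\<bar>
    \<le> C * real k * (2 + Cm) / 2"
proof -
  let ?n = "N \<nu>"
  have weight: "\<bar>m \<nu> (t div ?n) (t mod ?n) * piP (P \<nu>) (t div ?n) (t mod ?n)\<bar> \<le> C" if "t < k * ?n" for t
    using flat_weight_range[OF that] A5_c unfolding abs_le_iff by linarith
  have col: "(\<Sum>t<k * ?n. (v t)^4) \<le> real k * real ?n * (1 + Cm)" if "v \<in> data_columns k p ?n (X \<nu>) y" for v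
    using k_pos mom_X mom_y \<open>Cm \<ge> 0\<close> that by (rule data_column_fourth_le)
  have "\<bar>weighted_moment k p ?n (X \<nu>) (\<lambda>a i. m \<nu> a i * piP (P \<nu>) a i) y $ r\<bar>
      \<le> C * ((\<Sum>t<k * ?n. (design_entry k ?n (X \<nu>) r t)^4) + (\<Sum>t<k * ?n. (y (t div ?n) (t mod ?n))^4)
             + 2 * real (k * ?n)) / 4"
    unfolding weighted_moment_index[OF \<open>r < k + p\<close>]
    using weight A5_c A5_cC by (intro abs_sum_weighted_product_le) auto
  also have "\<dots> \<le> C * (real k * real ?n * (1 + Cm) + real k * real ?n * (1 + Cm) + 2 * real (k * ?n)) / 4"
    using A5_c A5_cC \<open>r < k + p\<close>
    by (intro divide_right_mono mult_left_mono add_mono col) (auto simp: data_columns_def)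
  also have "\<dots> = real ?n * (C * real k * (2 + Cm) / 2)"
    by (simp add: algebra_simps)
  finally show ?thesis
    using \<open>N \<nu> > 0\<close> by (simp add: pos_divide_le_eq mult.commute)
qed

lemma prob_bhat_error_gt_le:
  fixes y :: "nat \<Rightarrow> nat \<Rightarrow> real"
  assumes "N \<nu> > 0"
    and coer: "coercive (k + p) (\<lambda>r s. gram k p (N \<nu>) (X \<nu>) (\<lambda>a i. m \<nu> a i * piP (P \<nu>) a i) $$ (r, s) / real (N \<nu>)) \<kappa>"
    and "\<kappa> > 0" and "\<tau> > 0" and "K \<ge> 0" and "\<delta> \<ge> 0"
    and small: "real (k + p) * (\<tau> * sqrt \<delta>) \<le> \<kappa> / 2"
    and bound: "\<And>r. r < k + p \<Longrightarrow> \<bar>weighted_moment k p (N \<nu>) (X \<nu>) (\<lambda>a i. m \<nu> a i * piP (P \<nu>) a i) y $ r / real (N \<nu>)\<bar> \<le> H"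
    and second_moment: "\<And>u. u \<in> fluct_weights k p (N \<nu>) (X \<nu>) (m \<nu>) y \<Longrightarrow>
       measure_pmf.expectation (P \<nu>) (\<lambda>z. (fluct k (N \<nu>) (P \<nu>) u z)\<^sup>2) \<le> K * \<delta>"
  shows "measure_pmf.prob (P \<nu>) {z. vnorm (bhat k p (N \<nu>) y (X \<nu>) (m \<nu>) z - btarget k p (N \<nu>) y (X \<nu>) (m \<nu>) (P \<nu>))
      > 2 * \<tau> * (1 + real (k + p) * H / \<kappa>) * sqrt (real (k + p)) / \<kappa> * sqrt \<delta>}
    \<le> real ((k + p) * (k + p + 1)) * K / \<tau>\<^sup>2"
proof -
  let ?W = "fluct_weights k p (N \<nu>) (X \<nu>) (m \<nu>) y"
  have eq: "2 * \<tau> * (1 + real (k + p) * H / \<kappa>) * sqrt (real (k + p)) / \<kappa> * sqrt \<delta>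
      = 2 * (\<tau> * sqrt \<delta>) * (1 + real (k + p) * H / \<kappa>) * sqrt (real (k + p)) / \<kappa>"
    by simp
  have "measure_pmf.prob (P \<nu>) {z. vnorm (bhat k p (N \<nu>) y (X \<nu>) (m \<nu>) z - btarget k p (N \<nu>) y (X \<nu>) (m \<nu>) (P \<nu>))
      > 2 * \<tau> * (1 + real (k + p) * H / \<kappa>) * sqrt (real (k + p)) / \<kappa> * sqrt \<delta>}
    \<le> (\<Sum>u\<in>?W. measure_pmf.prob (P \<nu>) {z. \<bar>fluct k (N \<nu>) (P \<nu>) u z\<bar> > \<tau> * sqrt \<delta>})"
    unfolding eq using \<open>\<tau> > 0\<close> \<open>\<delta> \<ge> 0\<close>
    by (intro prob_vnorm_bhat_diff_gt_le[OF \<open>N \<nu> > 0\<close> coer \<open>\<kappa> > 0\<close> _ small bound]) simp_all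
  also have "\<dots> \<le> (\<Sum>u\<in>?W. K / \<tau>\<^sup>2)"
  proof (rule sum_mono)
    fix u assume "u \<in> ?W"
    show "measure_pmf.prob (P \<nu>) {z. \<bar>fluct k (N \<nu>) (P \<nu>) u z\<bar> > \<tau> * sqrt \<delta>} \<le> K / \<tau>\<^sup>2"
      using abs_fluct_le[of k "N \<nu>" "P \<nu>" u] flat_pi_range second_moment[OF \<open>u \<in> ?W\<close>] \<open>\<delta> \<ge> 0\<close> \<open>\<tau> > 0\<close> \<open>K \<ge> 0\<close>
      by (intro prob_abs_gt_le_second_moment) (auto simp: less_imp_le)
  qed
  also have "\<dots> \<le> real ((k + p) * (k + p + 1)) * K / \<tau>\<^sup>2"
    using card_fluct_weights_le[of k p "N \<nu>" "X \<nu>" "m \<nu>" y] \<open>K \<ge> 0\<close>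
    by (simp add: divide_right_mono mult_right_mono del: of_nat_mult)
  finally show ?thesis .
qed

lemma eventually_prob_bhat_error_gt_le:
  fixes y :: "nat \<Rightarrow> nat \<Rightarrow> nat \<Rightarrow> real"
  assumes mom_X: "\<And>\<nu>. (\<Sum>s<p. \<Sum>i<N \<nu>. (X \<nu> i s)^4) \<le> real (N \<nu>) * Cm"
    and mom_y: "\<And>\<nu>. (\<Sum>a<k. \<Sum>i<N \<nu>. (y \<nu> a i)^4) \<le> real (N \<nu>) * Cm" and "Cm \<ge> 0"
    and \<delta>_nonneg: "\<And>\<nu>. \<delta> \<nu> \<ge> 0" and \<delta>_lim: "(\<delta> \<longlongrightarrow> 0) sequentially" and "K \<ge> 0"
    and second_moment: "\<And>\<nu> u. N \<nu> > 0 \<Longrightarrow> u \<in> fluct_weights k p (N \<nu>) (X \<nu>) (m \<nu>) (y \<nu>) \<Longrightarrow>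
       measure_pmf.expectation (P \<nu>) (\<lambda>z. (fluct k (N \<nu>) (P \<nu>) u z)\<^sup>2) \<le> K * \<delta> \<nu>"
    and "\<tau> > 0"
  obtains B where "eventually (\<lambda>\<nu>. measure_pmf.prob (P \<nu>) {z. vnorm (bhat k p (N \<nu>) (y \<nu>) (X \<nu>) (m \<nu>) z
      - btarget k p (N \<nu>) (y \<nu>) (X \<nu>) (m \<nu>) (P \<nu>)) > B * sqrt (\<delta> \<nu>)}
    \<le> real ((k + p) * (k + p + 1)) * K / \<tau>\<^sup>2) sequentially"
proof -
  obtain \<kappa> where "\<kappa> > 0" and ev_coer: "eventually (\<lambda>\<nu>. coercive (k + p)
      (\<lambda>r s. gram k p (N \<nu>) (X \<nu>) (\<lambda>a i. m \<nu> a i * piP (P \<nu>) a i) $$ (r, s) / real (N \<nu>)) \<kappa>) sequentially"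
    by (rule eventually_coercive_gram)
  define d H where "d = real (k + p)" and "H = C * real k * (2 + Cm) / 2"
  have "d > 0"
    using k_pos unfolding d_def by simp
  have "((\<lambda>\<nu>. sqrt (\<delta> \<nu>)) \<longlongrightarrow> 0) sequentially"
    using tendsto_real_sqrt[OF \<delta>_lim] by simp
  moreover have "\<kappa> / (2 * d * \<tau>) > 0"
    using \<open>\<kappa> > 0\<close> \<open>d > 0\<close> \<open>\<tau> > 0\<close> by simp
  ultimately have ev_small: "eventually (\<lambda>\<nu>. sqrt (\<delta> \<nu>) < \<kappa> / (2 * d * \<tau>)) sequentially"
    by (rule order_tendstoD(2))
  have ev_N: "eventually (\<lambda>\<nu>. N \<nu> \<ge> 1) sequentially"
    using N_lim unfolding filterlim_at_top by blast
  have "eventually (\<lambda>\<nu>. measure_pmf.prob (P \<nu>) {z. vnorm (bhat k p (N \<nu>) (y \<nu>) (X \<nu>) (m \<nu>) z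
      - btarget k p (N \<nu>) (y \<nu>) (X \<nu>) (m \<nu>) (P \<nu>)) > 2 * \<tau> * (1 + d * H / \<kappa>) * sqrt d / \<kappa> * sqrt (\<delta> \<nu>)}
    \<le> real ((k + p) * (k + p + 1)) * K / \<tau>\<^sup>2) sequentially"
    using ev_N ev_small ev_coer
  proof eventually_elim
    case (elim \<nu>)
    have small: "d * (\<tau> * sqrt (\<delta> \<nu>)) \<le> \<kappa> / 2"
      using elim \<open>d > 0\<close> \<open>\<tau> > 0\<close> by (simp add: field_simps)
    show ?case
      unfolding d_def H_def
      using elim \<open>\<kappa> > 0\<close> \<open>\<tau> > 0\<close> \<open>K \<ge> 0\<close> \<delta>_nonneg small mom_X mom_y \<open>Cm \<ge> 0\<close>
      by (intro prob_bhat_error_gt_le abs_weighted_moment_target_le second_moment) (simp_all add: d_def)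
  qed
  then show ?thesis
    using that by blast
qed

lemma bigO_p_of_fluct_second_moments:
  fixes y :: "nat \<Rightarrow> nat \<Rightarrow> nat \<Rightarrow> real"
  assumes mom_X: "\<And>\<nu>. (\<Sum>s<p. \<Sum>i<N \<nu>. (X \<nu> i s)^4) \<le> real (N \<nu>) * Cm"
    and mom_y: "\<And>\<nu>. (\<Sum>a<k. \<Sum>i<N \<nu>. (y \<nu> a i)^4) \<le> real (N \<nu>) * Cm" and "Cm \<ge> 0"
    and \<delta>_nonneg: "\<And>\<nu>. \<delta> \<nu> \<ge> 0" and \<delta>_lim: "(\<delta> \<longlongrightarrow> 0) sequentially" and "K \<ge> 0"
    and second_moment: "\<And>\<nu> u. N \<nu> > 0 \<Longrightarrow> u \<in> fluct_weights k p (N \<nu>) (X \<nu>) (m \<nu>) (y \<nu>) \<Longrightarrow>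
       measure_pmf.expectation (P \<nu>) (\<lambda>z. (fluct k (N \<nu>) (P \<nu>) u z)\<^sup>2) \<le> K * \<delta> \<nu>"
  shows "bigO_p P (\<lambda>\<nu> z. bhat k p (N \<nu>) (y \<nu>) (X \<nu>) (m \<nu>) z - btarget k p (N \<nu>) (y \<nu>) (X \<nu>) (m \<nu>) (P \<nu>))
    (\<lambda>\<nu>. sqrt (\<delta> \<nu>))"
  unfolding bigO_p_def
proof (intro allI impI)
  fix \<epsilon> :: real assume "\<epsilon> > 0"
  define J where "J = real ((k + p) * (k + p + 1))"
  define \<tau> where "\<tau> = J * K / \<epsilon> + 1"
  have "J \<ge> 0" "\<tau> \<ge> 1"
    using \<open>K \<ge> 0\<close> \<open>\<epsilon> > 0\<close> unfolding J_def \<tau>_def by simp_all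
  have "J * K / \<tau>\<^sup>2 \<le> J * K / \<tau>"
    using \<open>J \<ge> 0\<close> \<open>K \<ge> 0\<close> \<open>\<tau> \<ge> 1\<close> by (intro divide_left_mono) (simp_all add: power2_eq_square)
  also have "\<dots> < \<epsilon>"
    using \<open>\<epsilon> > 0\<close> \<open>\<tau> \<ge> 1\<close> unfolding \<tau>_def by (simp add: pos_divide_less_eq field_simps)
  finally have "J * K / \<tau>\<^sup>2 < \<epsilon>" .
  have "\<tau> > 0"
    using \<open>\<tau> \<ge> 1\<close> by simp
  obtain B where "eventually (\<lambda>\<nu>. measure_pmf.prob (P \<nu>) {z. vnorm (bhat k p (N \<nu>) (y \<nu>) (X \<nu>) (m \<nu>) z
      - btarget k p (N \<nu>) (y \<nu>) (X \<nu>) (m \<nu>) (P \<nu>)) > B * sqrt (\<delta> \<nu>)} \<le> J * K / \<tau>\<^sup>2) sequentially"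
    unfolding J_def
    by (rule eventually_prob_bhat_error_gt_le[OF mom_X mom_y \<open>Cm \<ge> 0\<close> \<delta>_nonneg \<delta>_lim \<open>K \<ge> 0\<close> second_moment \<open>\<tau> > 0\<close>])
  then obtain N0 where "\<forall>\<nu>\<ge>N0. measure_pmf.prob (P \<nu>) {z. vnorm (bhat k p (N \<nu>) (y \<nu>) (X \<nu>) (m \<nu>) z
      - btarget k p (N \<nu>) (y \<nu>) (X \<nu>) (m \<nu>) (P \<nu>)) > B * sqrt (\<delta> \<nu>)} \<le> J * K / \<tau>\<^sup>2"
    unfolding eventually_sequentially by blast
  then show "\<exists>B N0. \<forall>\<nu>\<ge>N0. measure_pmf.prob (P \<nu>) {z. vnorm (bhat k p (N \<nu>) (y \<nu>) (X \<nu>) (m \<nu>) z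
      - btarget k p (N \<nu>) (y \<nu>) (X \<nu>) (m \<nu>) (P \<nu>)) > B * sqrt (\<delta> \<nu>)} < \<epsilon>"
    using \<open>J * K / \<tau>\<^sup>2 < \<epsilon>\<close> by (intro exI[of _ B] exI[of _ N0]) (auto intro: le_less_trans)
qed

lemma fluct_weight_product:
  assumes "u \<in> fluct_weights k p (N \<nu>) (X \<nu>) (m \<nu>) y"
  obtains r v where "r < k + p" "v \<in> data_columns k p (N \<nu>) (X \<nu>) y"
    "\<And>t. u t * piP (P \<nu>) (t div N \<nu>) (t mod N \<nu>)
       = design_entry k (N \<nu>) (X \<nu>) r t * (m \<nu> (t div N \<nu>) (t mod N \<nu>) * piP (P \<nu>) (t div N \<nu>) (t mod N \<nu>)) * v t"
  using assms unfolding fluct_weights_def by (auto simp: ac_simps)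

lemma abs_flat_weight_le: "t < k * N \<nu> \<Longrightarrow>
    \<bar>m \<nu> (t div N \<nu>) (t mod N \<nu>) * piP (P \<nu>) (t div N \<nu>) (t mod N \<nu>)\<bar> \<le> C"
  using flat_weight_range[of t \<nu>] A5_c unfolding abs_le_iff by linarith

lemma fluct_second_moment_le_spec_norm:
  fixes y :: "nat \<Rightarrow> nat \<Rightarrow> real"
  assumes mom_X: "(\<Sum>s<p. \<Sum>i<N \<nu>. (X \<nu> i s)^4) \<le> real (N \<nu>) * Cm"
    and mom_y: "(\<Sum>a<k. \<Sum>i<N \<nu>. (y a i)^4) \<le> real (N \<nu>) * Cm" and "Cm \<ge> 0"
    and "N \<nu> > 0" and "u \<in> fluct_weights k p (N \<nu>) (X \<nu>) (m \<nu>) y"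
  shows "measure_pmf.expectation (P \<nu>) (\<lambda>z. (fluct k (N \<nu>) (P \<nu>) u z)\<^sup>2)
    \<le> C\<^sup>2 * real k * (1 + Cm) * (spec_norm (Dmat k (N \<nu>) (P \<nu>)) / real (N \<nu>))"
proof -
  let ?n = "N \<nu>" and ?S = "spec_norm (Dmat k (N \<nu>) (P \<nu>))"
  obtain r v where "r < k + p" and v: "v \<in> data_columns k p ?n (X \<nu>) y"
    and u: "\<And>t. u t * piP (P \<nu>) (t div ?n) (t mod ?n)
       = design_entry k ?n (X \<nu>) r t * (m \<nu> (t div ?n) (t mod ?n) * piP (P \<nu>) (t div ?n) (t mod ?n)) * v t"
    using fluct_weight_product[OF \<open>u \<in> _\<close>] by blast
  have col: "(\<Sum>t<k * ?n. (w t)^4) \<le> real k * real ?n * (1 + Cm)" if "w \<in> data_columns k p ?n (X \<nu>) y" for w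
    using k_pos mom_X mom_y \<open>Cm \<ge> 0\<close> that by (rule data_column_fourth_le)
  have "sq_norm (k * ?n) (\<lambda>t. u t * piP (P \<nu>) (t div ?n) (t mod ?n))
      \<le> C\<^sup>2 * ((\<Sum>t<k * ?n. (design_entry k ?n (X \<nu>) r t)^4) + (\<Sum>t<k * ?n. (v t)^4)) / 2"
    unfolding u by (rule sq_norm_weighted_product_le[OF abs_flat_weight_le])
  also have "\<dots> \<le> C\<^sup>2 * (real k * real ?n * (1 + Cm) + real k * real ?n * (1 + Cm)) / 2"
    using \<open>r < k + p\<close> v by (intro divide_right_mono mult_left_mono add_mono col) (auto simp: data_columns_def)
  finally have sq: "sq_norm (k * ?n) (\<lambda>t. u t * piP (P \<nu>) (t div ?n) (t mod ?n)) \<le> C\<^sup>2 * real k * (1 + Cm) * real ?n"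
    by simp
  have "measure_pmf.expectation (P \<nu>) (\<lambda>z. (fluct k ?n (P \<nu>) u z)\<^sup>2)
      \<le> ?S * sq_norm (k * ?n) (\<lambda>t. u t * piP (P \<nu>) (t div ?n) (t mod ?n)) / (real ?n)\<^sup>2"
    using flat_pi_range by (intro expectation_fluct_squared_le_spec_norm) blast
  also have "\<dots> \<le> ?S * (C\<^sup>2 * real k * (1 + Cm) * real ?n) / (real ?n)\<^sup>2"
    using sq spec_norm_nonneg[of "Dmat k ?n (P \<nu>)" "k * ?n"]
    by (intro divide_right_mono mult_left_mono) (auto simp: Dmat_def)
  also have "\<dots> = C\<^sup>2 * real k * (1 + Cm) * (?S / real ?n)"
    using \<open>N \<nu> > 0\<close> by (simp add: power2_eq_square)
  finally show ?thesis .
qed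

lemma fluct_second_moment_le_l1_norm:
  fixes y :: "nat \<Rightarrow> nat \<Rightarrow> real"
  assumes bounded_X: "\<And>s i. s < p \<Longrightarrow> i < N \<nu> \<Longrightarrow> \<bar>X \<nu> i s\<bar> \<le> B"
    and bounded_y: "\<And>a i. a < k \<Longrightarrow> i < N \<nu> \<Longrightarrow> \<bar>y a i\<bar> \<le> B"
    and "N \<nu> > 0" and "u \<in> fluct_weights k p (N \<nu>) (X \<nu>) (m \<nu>) y"
  shows "measure_pmf.expectation (P \<nu>) (\<lambda>z. (fluct k (N \<nu>) (P \<nu>) u z)\<^sup>2)
    \<le> (C * (max 1 B)\<^sup>2)\<^sup>2 * (l1_norm (Dmat k (N \<nu>) (P \<nu>)) / real (N \<nu>) / real (N \<nu>))"
proof -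
  let ?n = "N \<nu>"
  obtain r v where "r < k + p" and v: "v \<in> data_columns k p ?n (X \<nu>) y"
    and u: "\<And>t. u t * piP (P \<nu>) (t div ?n) (t mod ?n)
       = design_entry k ?n (X \<nu>) r t * (m \<nu> (t div ?n) (t mod ?n) * piP (P \<nu>) (t div ?n) (t mod ?n)) * v t"
    using fluct_weight_product[OF \<open>u \<in> _\<close>] by blast
  have "\<bar>u t * piP (P \<nu>) (t div ?n) (t mod ?n)\<bar> \<le> C * (max 1 B)\<^sup>2" if "t < k * ?n" for t
  proof -
    have prod: "\<bar>a * w * b\<bar> \<le> A * W * B" if "\<bar>a\<bar> \<le> A" "\<bar>w\<bar> \<le> W" "\<bar>b\<bar> \<le> B" for a w b A W B :: real
      using that unfolding abs_mult by (intro mult_mono) (auto intro: order_trans[OF abs_ge_zero])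
    have "\<bar>design_entry k ?n (X \<nu>) r t\<bar> \<le> max 1 B" "\<bar>v t\<bar> \<le> max 1 B"
      using abs_data_column_le[OF bounded_X bounded_y _ that] v \<open>r < k + p\<close>
      by (auto simp: data_columns_def)
    from prod[OF this(1) abs_flat_weight_le[OF that] this(2)] show ?thesis
      unfolding u by (simp add: power2_eq_square ac_simps)
  qed
  then have "measure_pmf.expectation (P \<nu>) (\<lambda>z. (fluct k ?n (P \<nu>) u z)\<^sup>2)
      \<le> (C * (max 1 B)\<^sup>2)\<^sup>2 * l1_norm (Dmat k ?n (P \<nu>)) / (real ?n)\<^sup>2"
    using flat_pi_range by (intro expectation_fluct_squared_le_l1_norm) blast+
  then show ?thesis
    by (simp add: power2_eq_square)
qed

lemma bigO_p_spec_norm_rate: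
  fixes y :: "nat \<Rightarrow> nat \<Rightarrow> nat \<Rightarrow> real"
  assumes A1: "\<exists>Cm. \<forall>\<nu>. (\<Sum>a<k. \<Sum>i<N \<nu>. (y \<nu> a i)^4) / real (N \<nu>) < Cm \<and>
                (\<Sum>s<p. \<Sum>i<N \<nu>. (X \<nu> i s)^4) / real (N \<nu>) < Cm"
    and lim: "((\<lambda>\<nu>. spec_norm (Dmat k (N \<nu>) (P \<nu>)) / real (N \<nu>)) \<longlongrightarrow> 0) sequentially"
  shows "bigO_p P (\<lambda>\<nu> z. bhat k p (N \<nu>) (y \<nu>) (X \<nu>) (m \<nu>) z - btarget k p (N \<nu>) (y \<nu>) (X \<nu>) (m \<nu>) (P \<nu>))
    (\<lambda>\<nu>. sqrt (spec_norm (Dmat k (N \<nu>) (P \<nu>)) / real (N \<nu>)))"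
proof -
  obtain Cm where mean_y: "\<And>\<nu>. (\<Sum>a<k. \<Sum>i<N \<nu>. (y \<nu> a i)^4) / real (N \<nu>) < Cm"
    and mean_X: "\<And>\<nu>. (\<Sum>s<p. \<Sum>i<N \<nu>. (X \<nu> i s)^4) / real (N \<nu>) < Cm"
    using A1 by blast
  have "0 \<le> (\<Sum>a<k. \<Sum>i<N 0. (y 0 a i)^4) / real (N 0)"
    by (intro divide_nonneg_nonneg sum_nonneg) auto
  then have "Cm \<ge> 0"
    using mean_y[of 0] by linarith
  have mom_X: "(\<Sum>s<p. \<Sum>i<N \<nu>. (X \<nu> i s)^4) \<le> real (N \<nu>) * Cm" for \<nu>
    using mean_X by (rule sum_le_of_mean_less)
  have mom_y: "(\<Sum>a<k. \<Sum>i<N \<nu>. (y \<nu> a i)^4) \<le> real (N \<nu>) * Cm" for \<nu>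
    using mean_y by (rule sum_le_of_mean_less)
  show ?thesis
  proof (rule bigO_p_of_fluct_second_moments[OF mom_X mom_y \<open>Cm \<ge> 0\<close> _ lim])
    show "spec_norm (Dmat k (N \<nu>) (P \<nu>)) / real (N \<nu>) \<ge> 0" for \<nu>
      using spec_norm_nonneg[of "Dmat k (N \<nu>) (P \<nu>)" "k * N \<nu>"] by (simp add: Dmat_def)
    show "measure_pmf.expectation (P \<nu>) (\<lambda>z. (fluct k (N \<nu>) (P \<nu>) u z)\<^sup>2)
        \<le> C\<^sup>2 * real k * (1 + Cm) * (spec_norm (Dmat k (N \<nu>) (P \<nu>)) / real (N \<nu>))"
      if "N \<nu> > 0" "u \<in> fluct_weights k p (N \<nu>) (X \<nu>) (m \<nu>) (y \<nu>)" for \<nu> u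
      using mom_X mom_y \<open>Cm \<ge> 0\<close> that by (rule fluct_second_moment_le_spec_norm)
  qed (use \<open>Cm \<ge> 0\<close> in simp)
qed

lemma bigO_p_l1_norm_rate:
  fixes y :: "nat \<Rightarrow> nat \<Rightarrow> nat \<Rightarrow> real"
  assumes A1': "\<exists>B. (\<forall>\<nu> a i. a < k \<longrightarrow> i < N \<nu> \<longrightarrow> \<bar>y \<nu> a i\<bar> \<le> B) \<and>
          (\<forall>\<nu> s i. s < p \<longrightarrow> i < N \<nu> \<longrightarrow> \<bar>X \<nu> i s\<bar> \<le> B)"
    and lim: "((\<lambda>\<nu>. l1_norm (Dmat k (N \<nu>) (P \<nu>)) / real (N \<nu>) / real (N \<nu>)) \<longlongrightarrow> 0) sequentially"
  shows "bigO_p P (\<lambda>\<nu> z. bhat k p (N \<nu>) (y \<nu>) (X \<nu>) (m \<nu>) z - btarget k p (N \<nu>) (y \<nu>) (X \<nu>) (m \<nu>) (P \<nu>))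
    (\<lambda>\<nu>. sqrt (l1_norm (Dmat k (N \<nu>) (P \<nu>)) / real (N \<nu>) / real (N \<nu>)))"
proof -
  obtain B where bounded_y: "\<And>\<nu> a i. a < k \<Longrightarrow> i < N \<nu> \<Longrightarrow> \<bar>y \<nu> a i\<bar> \<le> B"
    and bounded_X: "\<And>\<nu> s i. s < p \<Longrightarrow> i < N \<nu> \<Longrightarrow> \<bar>X \<nu> i s\<bar> \<le> B"
    using A1' by blast
  define Bx where "Bx = max 1 B"
  have "B \<le> Bx"
    unfolding Bx_def by simp
  have mom_y: "(\<Sum>a<k. \<Sum>i<N \<nu>. (y \<nu> a i)^4) \<le> real (N \<nu>) * (real (k + p) * Bx^4)" for \<nu>
  proof -
    have "(\<Sum>a<k. \<Sum>i<N \<nu>. (y \<nu> a i)^4) \<le> real (N \<nu>) * (real k * Bx^4)"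
      using bounded_y \<open>B \<le> Bx\<close> by (intro sum_fourth_le_of_bounded) (meson order_trans)
    also have "\<dots> \<le> real (N \<nu>) * (real (k + p) * Bx^4)"
      by (intro mult_left_mono mult_right_mono) simp_all
    finally show ?thesis .
  qed
  have mom_X: "(\<Sum>s<p. \<Sum>i<N \<nu>. (X \<nu> i s)^4) \<le> real (N \<nu>) * (real (k + p) * Bx^4)" for \<nu>
  proof -
    have "(\<Sum>s<p. \<Sum>i<N \<nu>. (X \<nu> i s)^4) \<le> real (N \<nu>) * (real p * Bx^4)"
      using bounded_X \<open>B \<le> Bx\<close> by (intro sum_fourth_le_of_bounded) (meson order_trans)
    also have "\<dots> \<le> real (N \<nu>) * (real (k + p) * Bx^4)"
      by (intro mult_left_mono mult_right_mono) simp_all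
    finally show ?thesis .
  qed
  show ?thesis
  proof (rule bigO_p_of_fluct_second_moments[OF mom_X mom_y _ _ lim])
    show "l1_norm (Dmat k (N \<nu>) (P \<nu>)) / real (N \<nu>) / real (N \<nu>) \<ge> 0" for \<nu>
      unfolding l1_norm_def by (simp add: sum_nonneg)
    show "measure_pmf.expectation (P \<nu>) (\<lambda>z. (fluct k (N \<nu>) (P \<nu>) u z)\<^sup>2)
        \<le> (C * Bx\<^sup>2)\<^sup>2 * (l1_norm (Dmat k (N \<nu>) (P \<nu>)) / real (N \<nu>) / real (N \<nu>))"
      if "N \<nu> > 0" "u \<in> fluct_weights k p (N \<nu>) (X \<nu>) (m \<nu>) (y \<nu>)" for \<nu> u
      unfolding Bx_def using bounded_X bounded_y that by (rule fluct_second_moment_le_l1_norm)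
  qed simp_all
qed

end

theorem mainTheorem12:
  fixes k p :: nat
    and N :: "nat \<Rightarrow> nat"
    and y :: "nat \<Rightarrow> nat \<Rightarrow> nat \<Rightarrow> real"
    and X :: "nat \<Rightarrow> nat \<Rightarrow> nat \<Rightarrow> real"
    and m :: "nat \<Rightarrow> nat \<Rightarrow> nat \<Rightarrow> real"
    and P :: "nat \<Rightarrow> (nat \<Rightarrow> nat) pmf"
    and M :: "real Matrix.mat"
    and c C :: real
  assumes k_pos: "k \<ge> 1"
    and N_lim: "filterlim N at_top sequentially"
    and design: "\<And>\<nu> z i. z \<in> set_pmf (P \<nu>) \<Longrightarrow> i < N \<nu> \<Longrightarrow> z i < k"
    and pi_range: "\<And>\<nu> a i. a < k \<Longrightarrow> i < N \<nu> \<Longrightarrow>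
                     0 < piP (P \<nu>) a i \<and> piP (P \<nu>) a i < 1"
    and m_pos: "\<And>\<nu> a i. a < k \<Longrightarrow> i < N \<nu> \<Longrightarrow> m \<nu> a i > 0"
    and A2_dim: "M \<in> carrier_mat (k+p) (k+p)"
    and A2_pd: "pos_def_mat M"
    and A2_lim: "\<And>r s. r < k+p \<Longrightarrow> s < k+p \<Longrightarrow>
       ((\<lambda>\<nu>. (transpose_mat (design_x k p (N \<nu>) (X \<nu>)) * design_x k p (N \<nu>) (X \<nu>)) $$ (r,s)
               / real (N \<nu>)) \<longlongrightarrow> M $$ (r,s)) sequentially"
    and A5_c: "0 < c" and A5_cC: "c < C"
    and A5: "\<And>\<nu> a i. a < k \<Longrightarrow> i < N \<nu> \<Longrightarrow>
               c < m \<nu> a i * piP (P \<nu>) a i \<and> m \<nu> a i * piP (P \<nu>) a i < C"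
  shows
   "((\<exists>C1. \<forall>\<nu>. (\<Sum>a<k. \<Sum>i<N \<nu>. (y \<nu> a i)^4) / real (N \<nu>) < C1 \<and>
                (\<Sum>s<p. \<Sum>i<N \<nu>. (X \<nu> i s)^4) / real (N \<nu>) < C1) \<longrightarrow>
     ((\<lambda>\<nu>. spec_norm (Dmat k (N \<nu>) (P \<nu>)) / real (N \<nu>)) \<longlongrightarrow> 0) sequentially \<longrightarrow>
     bigO_p P (\<lambda>\<nu> z. bhat k p (N \<nu>) (y \<nu>) (X \<nu>) (m \<nu>) z
                      - btarget k p (N \<nu>) (y \<nu>) (X \<nu>) (m \<nu>) (P \<nu>))
        (\<lambda>\<nu>. sqrt (spec_norm (Dmat k (N \<nu>) (P \<nu>)) / real (N \<nu>))))
  \<and>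
    ((\<exists>B. (\<forall>\<nu> a i. a < k \<longrightarrow> i < N \<nu> \<longrightarrow> \<bar>y \<nu> a i\<bar> \<le> B) \<and>
          (\<forall>\<nu> s i. s < p \<longrightarrow> i < N \<nu> \<longrightarrow> \<bar>X \<nu> i s\<bar> \<le> B)) \<longrightarrow>
     ((\<lambda>\<nu>. l1_norm (Dmat k (N \<nu>) (P \<nu>)) / real (N \<nu>) / real (N \<nu>)) \<longlongrightarrow> 0) sequentially \<longrightarrow>
     bigO_p P (\<lambda>\<nu> z. bhat k p (N \<nu>) (y \<nu>) (X \<nu>) (m \<nu>) z
                      - btarget k p (N \<nu>) (y \<nu>) (X \<nu>) (m \<nu>) (P \<nu>))
        (\<lambda>\<nu>. sqrt (l1_norm (Dmat k (N \<nu>) (P \<nu>)) / real (N \<nu>) / real (N \<nu>))))"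
proof -
  interpret wls_design k p N X m P M c C
    using k_pos N_lim pi_range A2_dim A2_pd A2_lim A5_c A5_cC A5 by unfold_locales
  show ?thesis
    using bigO_p_spec_norm_rate bigO_p_l1_norm_rate by blast
qed

end
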